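(* If a finite-dimensional algebra $\Lambda$ is hom-irreducible, then $\Lambda$ is ext-irreducible.
   Context: $\Bbbk$ is algebraically closed. Let $\Lambda=\Bbbk Q/I$ be the path algebra of a bound quiver (for an arbitrary finite-dimensional algebra the notions are taken for a Morita-equivalent bound quiver algebra). $\mathrm{rep}_\Lambda(\mathbf d)$ is the variety of representations $V=(V_\alpha)_{\alpha\in Q_1}$, $V_\alpha\in M_{d_{t\alpha}\times d_{s\alpha}}(\Bbbk)$, satisfying the relations in $I$. Hom-irreducibility: $\mathcal H_\Lambda(\mathbf e,\mathbf d)$ is the variety of triples $(V,W,f)$ with $V\in\mathrm{rep}_\Lambda(\mathbf e)$, $W\in\mathrm{rep}_\Lambda(\mathbf d)$ and $f=(f_x)$, $f_x\in M_{d_x\times e_x}(\Bbbk)$, with $W_\alpha f_{s\alpha}=f_{t\alpha}V_\alpha$ for all $\alpha$; $\Lambda$ is hom-irreducible if all $\mathcal H_\Lambda(\mathbf e,\mathbf d)$ are irreducible. Ext-irreducibility: for $V\in\mathrm{rep}_\Lambda(\mathbf d)$, $U\in\mathrm{rep}_\Lambda(\mathbf e)$, $Z=(Z_\alpha)$ with $Z_\alpha\in M_{d_{t\alpha}\times e_{s\alpha}}(\Bbbk)$, let $W^{V,Z,U}_\alpha=\begin{pmatrix}V_\alpha&Z_\alpha\\0&U_\alpha\end{pmatrix}$ and $\mathbb Z^{U,V}$ the set of $Z$ for which $W^{V,Z,U}$ satisfies the relations of $I$. $\mathcal E_\Lambda(\mathbf e,\mathbf d)$ is the variety of triples $(U,V,Z)$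 with $U\in\mathrm{rep}_\Lambda(\mathbf e)$, $V\in\mathrm{rep}_\Lambda(\mathbf d)$, $Z\in\mathbb Z^{U,V}$; $\Lambda$ is ext-irreducible if all $\mathcal E_\Lambda(\mathbf e,\mathbf d)$ are irreducible. *)

theory Defs
  imports "Jordan_Normal_Form.Matrix" "HOL-Computational_Algebra.Polynomial"
begin

definition alg_closed :: "'k::field itself \<Rightarrow> bool" where
  "alg_closed _ \<longleftrightarrow> (\<forall>p :: 'k poly. degree p \<ge> 1 \<longrightarrow> (\<exists>x. poly p x = 0))"

inductive_set poly_funs :: "('p \<Rightarrow> 'k::comm_ring_1) set \<Rightarrow> ('p \<Rightarrow> 'k) set"
  for C :: "('p \<Rightarrow> 'k) set" where
  const: "(\<lambda>_. c) \<in> poly_funs C"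
| coord: "g \<in> C \<Longrightarrow> g \<in> poly_funs C"
| add: "g \<in> poly_funs C \<Longrightarrow> h \<in> poly_funs C \<Longrightarrow> (\<lambda>p. g p + h p) \<in> poly_funs C"
| mult: "g \<in> poly_funs C \<Longrightarrow> h \<in> poly_funs C \<Longrightarrow> (\<lambda>p. g p * h p) \<in> poly_funs C"

definition zariski_closed :: "('p \<Rightarrow> 'k::comm_ring_1) set \<Rightarrow> 'p set \<Rightarrow> bool" where
  "zariski_closed C Z \<longleftrightarrow> (\<exists>F \<subseteq> poly_funs C. Z = {p. \<forall>g\<in>F. g p = 0})"

definition irreducible_var :: "('p \<Rightarrow> 'k::comm_ring_1) set \<Rightarrow> 'p set \<Rightarrow> bool" where
  "irreducible_var C X \<longleftrightarrow> X \<noteq> {} \<and>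
     (\<forall>Z1 Z2. zariski_closed C Z1 \<and> zariski_closed C Z2 \<and> X \<subseteq> Z1 \<union> Z2
        \<longrightarrow> X \<subseteq> Z1 \<or> X \<subseteq> Z2)"

text \<open>Vertices are 0..<nverts, arrows are 0..<narrs.\<close>
record quiver =
  nverts :: nat
  narrs :: nat
  src :: "nat \<Rightarrow> nat"
  tgt :: "nat \<Rightarrow> nat"

definition wf_quiver :: "quiver \<Rightarrow> bool" where
  "wf_quiver Q \<longleftrightarrow> (\<forall>a<narrs Q. src Q a < nverts Q \<and> tgt Q a < nverts Q)"

text \<open>A path is (start vertex, list of arrows in order of traversal); (x,[]) is e_x.\<close>
type_synonym path = "nat \<times> nat list"

fun chain_ok :: "quiver \<Rightarrow> nat \<Rightarrow> nat list \<Rightarrow> bool" where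
  "chain_ok Q x [] = True"
| "chain_ok Q x (a # as) = (a < narrs Q \<and> src Q a = x \<and> chain_ok Q (tgt Q a) as)"

definition is_path :: "quiver \<Rightarrow> path \<Rightarrow> bool" where
  "is_path Q p \<longleftrightarrow> fst p < nverts Q \<and> chain_ok Q (fst p) (snd p)"

fun pend :: "quiver \<Rightarrow> nat \<Rightarrow> nat list \<Rightarrow> nat" where
  "pend Q x [] = x"
| "pend Q x (a # as) = pend Q (tgt Q a) as"

text \<open>Elements of the path algebra kQ: finitely supported linear combinations of paths.\<close>
definition in_kQ :: "quiver \<Rightarrow> (path \<Rightarrow> 'k::field) \<Rightarrow> bool" where
  "in_kQ Q f \<longleftrightarrow> finite {p. f p \<noteq> 0} \<and> (\<forall>p. f p \<noteq> 0 \<longrightarrow> is_path Q p)"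

text \<open>Multiplication (concatenation of paths, first factor traversed first).\<close>
definition kq_mult :: "quiver \<Rightarrow> (path \<Rightarrow> 'k::field) \<Rightarrow> (path \<Rightarrow> 'k) \<Rightarrow> (path \<Rightarrow> 'k)" where
  "kq_mult Q f g = (\<lambda>(x, cs). \<Sum>i\<le>length cs.
      f (x, take i cs) * g (pend Q x (take i cs), drop i cs))"

definition kq_ideal :: "quiver \<Rightarrow> ((path \<Rightarrow> 'k::field) set) \<Rightarrow> bool" where
  "kq_ideal Q I \<longleftrightarrow> I \<subseteq> {f. in_kQ Q f} \<and> (\<lambda>_. 0) \<in> I
     \<and> (\<forall>f\<in>I. \<forall>g\<in>I. (\<lambda>p. f p + g p) \<in> I)
     \<and> (\<forall>c. \<forall>f\<in>I. (\<lambda>p. c * f p) \<in> I)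
     \<and> (\<forall>f\<in>I. \<forall>g. in_kQ Q g \<longrightarrow> kq_mult Q g f \<in> I \<and> kq_mult Q f g \<in> I)"

text \<open>R^m = span of paths of length at least m (R the arrow ideal).\<close>
definition arrow_ideal_pow :: "quiver \<Rightarrow> nat \<Rightarrow> (path \<Rightarrow> 'k::field) set" where
  "arrow_ideal_pow Q m = {f. in_kQ Q f \<and> (\<forall>p. f p \<noteq> 0 \<longrightarrow> length (snd p) \<ge> m)}"

definition admissible :: "quiver \<Rightarrow> (path \<Rightarrow> 'k::field) set \<Rightarrow> bool" where
  "admissible Q I \<longleftrightarrow> kq_ideal Q I \<and> (\<exists>m\<ge>2. arrow_ideal_pow Q m \<subseteq> I)
     \<and> I \<subseteq> arrow_ideal_pow Q 2"

text \<open>Matrix of a path: V_{a_k} ... V_{a_1} for the path a_1, ..., a_k.\<close>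
fun pathmat :: "quiver \<Rightarrow> (nat \<Rightarrow> nat) \<Rightarrow> (nat \<Rightarrow> 'k::field mat) \<Rightarrow> nat \<Rightarrow> nat list \<Rightarrow> 'k mat" where
  "pathmat Q d V x [] = 1\<^sub>m (d x)"
| "pathmat Q d V x (a # as) = pathmat Q d V (tgt Q a) as * V a"

definition satisfies_rels :: "quiver \<Rightarrow> (path \<Rightarrow> 'k::field) set \<Rightarrow> (nat \<Rightarrow> nat) \<Rightarrow> (nat \<Rightarrow> 'k mat) \<Rightarrow> bool" where
  "satisfies_rels Q I d V \<longleftrightarrow> (\<forall>\<rho>\<in>I. \<forall>x<nverts Q. \<forall>y<nverts Q. \<forall>i<d y. \<forall>j<d x.
     (\<Sum>p\<in>{p. \<rho> p \<noteq> 0 \<and> fst p = x \<and> pend Q x (snd p) = y}.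
        \<rho> p * (pathmat Q d V x (snd p) $$ (i, j))) = 0)"

definition is_rep :: "quiver \<Rightarrow> (path \<Rightarrow> 'k::field) set \<Rightarrow> (nat \<Rightarrow> nat) \<Rightarrow> (nat \<Rightarrow> 'k mat) \<Rightarrow> bool" where
  "is_rep Q I d V \<longleftrightarrow> (\<forall>a<narrs Q. V a \<in> carrier_mat (d (tgt Q a)) (d (src Q a)))
     \<and> satisfies_rels Q I d V"

definition arrow_coords :: "quiver \<Rightarrow> (nat \<Rightarrow> nat) \<Rightarrow> (nat \<Rightarrow> nat) \<Rightarrow> ('p \<Rightarrow> (nat \<Rightarrow> 'k mat)) \<Rightarrow> ('p \<Rightarrow> 'k) set" where
  "arrow_coords Q r c sel = {(\<lambda>P. sel P a $$ (i, j)) | a i j. a < narrs Q \<and> i < r (tgt Q a) \<and> j < c (src Q a)}"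

definition vertex_coords :: "quiver \<Rightarrow> (nat \<Rightarrow> nat) \<Rightarrow> (nat \<Rightarrow> nat) \<Rightarrow> ('p \<Rightarrow> (nat \<Rightarrow> 'k mat)) \<Rightarrow> ('p \<Rightarrow> 'k) set" where
  "vertex_coords Q r c sel = {(\<lambda>P. sel P x $$ (i, j)) | x i j. x < nverts Q \<and> i < r x \<and> j < c x}"

type_synonym 'k triple = "(nat \<Rightarrow> 'k mat) \<times> (nat \<Rightarrow> 'k mat) \<times> (nat \<Rightarrow> 'k mat)"

text \<open>H(e,d): triples (V,W,f), V in rep(e), W in rep(d), f : V \<rightarrow> W a homomorphism.\<close>
definition hom_var :: "quiver \<Rightarrow> (path \<Rightarrow> 'k::field) set \<Rightarrow> (nat \<Rightarrow> nat) \<Rightarrow> (nat \<Rightarrow> nat) \<Rightarrow> 'k triple set" where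
  "hom_var Q I e d = {(V, W, f). is_rep Q I e V \<and> is_rep Q I d W
     \<and> (\<forall>x<nverts Q. f x \<in> carrier_mat (d x) (e x))
     \<and> (\<forall>a<narrs Q. W a * f (src Q a) = f (tgt Q a) * V a)}"

definition hom_coords :: "quiver \<Rightarrow> (nat \<Rightarrow> nat) \<Rightarrow> (nat \<Rightarrow> nat) \<Rightarrow> ('k::field triple \<Rightarrow> 'k) set" where
  "hom_coords Q e d = arrow_coords Q e e fst \<union> arrow_coords Q d d (fst \<circ> snd)
     \<union> vertex_coords Q d e (snd \<circ> snd)"

definition hom_irreducible :: "quiver \<Rightarrow> (path \<Rightarrow> 'k::field) set \<Rightarrow> bool" where
  "hom_irreducible Q I \<longleftrightarrow> (\<forall>e d. irreducible_var (hom_coords Q e d) (hom_var Q I e d))"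

definition block_rep :: "quiver \<Rightarrow> (nat \<Rightarrow> nat) \<Rightarrow> (nat \<Rightarrow> nat) \<Rightarrow> (nat \<Rightarrow> 'k::field mat) \<Rightarrow> (nat \<Rightarrow> 'k mat) \<Rightarrow> (nat \<Rightarrow> 'k mat) \<Rightarrow> (nat \<Rightarrow> 'k mat)" where
  "block_rep Q e d V Z U = (\<lambda>a. four_block_mat (V a) (Z a) (0\<^sub>m (e (tgt Q a)) (d (src Q a))) (U a))"

text \<open>E(e,d): triples (U,V,Z), U in rep(e), V in rep(d), Z in Z^{U,V}.\<close>
definition ext_var :: "quiver \<Rightarrow> (path \<Rightarrow> 'k::field) set \<Rightarrow> (nat \<Rightarrow> nat) \<Rightarrow> (nat \<Rightarrow> nat) \<Rightarrow> 'k triple set" where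
  "ext_var Q I e d = {(U, V, Z). is_rep Q I e U \<and> is_rep Q I d V
     \<and> (\<forall>a<narrs Q. Z a \<in> carrier_mat (d (tgt Q a)) (e (src Q a)))
     \<and> satisfies_rels Q I (\<lambda>x. d x + e x) (block_rep Q e d V Z U)}"

definition ext_coords :: "quiver \<Rightarrow> (nat \<Rightarrow> nat) \<Rightarrow> (nat \<Rightarrow> nat) \<Rightarrow> ('k::field triple \<Rightarrow> 'k) set" where
  "ext_coords Q e d = arrow_coords Q e e fst \<union> arrow_coords Q d d (fst \<circ> snd)
     \<union> arrow_coords Q d e (snd \<circ> snd)"

definition ext_irreducible :: "quiver \<Rightarrow> (path \<Rightarrow> 'k::field) set \<Rightarrow> bool" where
  "ext_irreducible Q I \<longleftrightarrow> (\<forall>e d. irreducible_var (ext_coords Q e d) (ext_var Q I e d))"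

end

(* Let H be the variety of homomorphisms f : V -> W with dim V = d and dim W = d + e, and E the
   variety of triples (U, V, Z) making the block matrices [[V, Z], [0, U]] a representation.
   On the open subset of H where the top d x d block F1 of every f_x is invertible, complete f_x
   to the invertible matrix G_x = [[F1, 0], [F2, 1]]; since W f = f V, conjugating W by G turns
   it into block upper triangular form [[V, Z], [0, U]], and this defines a map from that open
   subset of H onto E whose coordinates are polynomials divided by a power of det F1. It has a
   section (U, V, Z) |-> (V, [[V, Z], [0, U]], inclusion), so E is the image of a nonempty open,
   hence irreducible, subset of H under a Zariski-continuous map, and so E is irreducible. *)

theory Submission
  imports Defs "Jordan_Normal_Form.Determinant"
begin

section \<open>Polynomial functions and rational maps\<close>

lemma poly_funs_sum:
  assumes "finite A" "\<And>i. i \<in> A \<Longrightarrow> h i \<in> poly_funs C"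
  shows "(\<lambda>p. \<Sum>i\<in>A. h i p) \<in> poly_funs C"
  using assms
proof (induction A rule: finite_induct)
  case empty
  then show ?case using poly_funs.const[of 0 C] by simp
next
  case (insert x F)
  have "(\<lambda>p. h x p + (\<Sum>i\<in>F. h i p)) \<in> poly_funs C"
    by (rule poly_funs.add) (use insert in auto)
  then show ?case using insert by simp
qed

lemma poly_funs_prod:
  assumes "finite A" "\<And>i. i \<in> A \<Longrightarrow> h i \<in> poly_funs C"
  shows "(\<lambda>p. \<Prod>i\<in>A. h i p) \<in> poly_funs C"
  using assms
proof (induction A rule: finite_induct)
  case empty
  then show ?case using poly_funs.const[of 1 C] by simp
next
  case (insert x F)
  have "(\<lambda>p. h x p * (\<Prod>i\<in>F. h i p)) \<in> poly_funs C"
    by (rule poly_funs.mult) (use insert in auto)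
  then show ?case using insert by simp
qed

lemma poly_funs_cmult: "g \<in> poly_funs C \<Longrightarrow> (\<lambda>p. c * g p) \<in> poly_funs C"
  using poly_funs.mult[OF poly_funs.const[of c]] by blast

lemma poly_funs_uminus: "g \<in> poly_funs C \<Longrightarrow> (\<lambda>p. - g p) \<in> poly_funs C"
  using poly_funs_cmult[of g C "-1"] by simp

lemma poly_funs_power:
  assumes "g \<in> poly_funs C" shows "(\<lambda>p. g p ^ n) \<in> poly_funs C"
proof (induction n)
  case 0
  show ?case using poly_funs.const[of 1 C] by simp
next
  case (Suc n)
  show ?case using poly_funs.mult[OF assms Suc] by simp
qed

lemma poly_funs_eq_if_coords_eq:
  assumes "g \<in> poly_funs C" "\<And>c. c \<in> C \<Longrightarrow> c x = c y"
  shows "g x = g y"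
  using assms(1) by induction (use assms(2) in auto)

lemma zariski_closed_eq_if_coords_eq:
  assumes "zariski_closed C Z" "\<And>c. c \<in> C \<Longrightarrow> c x = c y"
  shows "x \<in> Z \<longleftrightarrow> y \<in> Z"
proof -
  obtain F where F: "F \<subseteq> poly_funs C" and Z_eq: "Z = {p. \<forall>g\<in>F. g p = 0}"
    using assms(1) unfolding zariski_closed_def by blast
  have "g x = g y" if "g \<in> F" for g
    using poly_funs_eq_if_coords_eq[of g C x y] assms(2) that F by blast
  then show ?thesis unfolding Z_eq mem_Collect_eq by metis
qed

definition rational_map :: "('p \<Rightarrow> 'k::comm_ring_1) set \<Rightarrow> ('p \<Rightarrow> 'k) \<Rightarrow> ('q \<Rightarrow> 'k) set \<Rightarrow> ('p \<Rightarrow> 'q) \<Rightarrow> bool"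
  where "rational_map C D C' \<psi> \<longleftrightarrow> (\<forall>c\<in>C'. \<exists>P\<in>poly_funs C. \<forall>p. D p \<noteq> 0 \<longrightarrow> P p = D p * c (\<psi> p))"

lemma poly_funs_rational_pullback:
  assumes "g \<in> poly_funs C'" and "rational_map C D C' \<psi>" and "D \<in> poly_funs C"
  shows "\<exists>n. \<exists>P\<in>poly_funs C. \<forall>p. D p \<noteq> 0 \<longrightarrow> P p = D p ^ n * g (\<psi> p)"
  using assms(1)
proof induction
  case (const c)
  show ?case by (rule exI[of _ 0], rule bexI[of _ "\<lambda>_. c"]) (auto intro: poly_funs.const)
next
  case (coord g)
  then show ?case using assms(2) unfolding rational_map_def by (metis power_one_right)
next
  case (add g h)
  from add.IH obtain n1 P1 n2 P2 where
    P1: "P1 \<in> poly_funs C" "\<forall>p. D p \<noteq> 0 \<longrightarrow> P1 p = D p ^ n1 * g (\<psi> p)" and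
    P2: "P2 \<in> poly_funs C" "\<forall>p. D p \<noteq> 0 \<longrightarrow> P2 p = D p ^ n2 * h (\<psi> p)"
      by blast
  let ?P = "\<lambda>p. D p ^ n2 * P1 p + D p ^ n1 * P2 p"
  have "?P \<in> poly_funs C"
    by (intro poly_funs.add poly_funs.mult poly_funs_power assms(3) P1 P2)
  moreover have "\<forall>p. D p \<noteq> 0 \<longrightarrow> ?P p = D p ^ (n1 + n2) * (g (\<psi> p) + h (\<psi> p))"
    using P1 P2 by (auto simp: algebra_simps power_add)
  ultimately show ?case by (intro exI[of _ "n1+n2"] bexI[of _ ?P])
next
  case (mult g h)
  from mult.IH obtain n1 P1 n2 P2 where
    P1: "P1 \<in> poly_funs C" "\<forall>p. D p \<noteq> 0 \<longrightarrow> P1 p = D p ^ n1 * g (\<psi> p)" and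
    P2: "P2 \<in> poly_funs C" "\<forall>p. D p \<noteq> 0 \<longrightarrow> P2 p = D p ^ n2 * h (\<psi> p)"
      by blast
  have "(\<lambda>p. P1 p * P2 p) \<in> poly_funs C"
    by (intro poly_funs.mult P1 P2)
  moreover have "\<forall>p. D p \<noteq> 0 \<longrightarrow> P1 p * P2 p = D p ^ (n1 + n2) * (g (\<psi> p) * h (\<psi> p))"
    using P1 P2 by (auto simp: algebra_simps power_add)
  ultimately show ?case by (intro exI[of _ "n1+n2"] bexI[of _ "\<lambda>p. P1 p * P2 p"])
qed

lemma zariski_closed_rational_preimage:
  fixes D :: "'p \<Rightarrow> 'k::idom"
  assumes Z: "zariski_closed C' Z" and D: "D \<in> poly_funs C"
    and \<psi>: "rational_map C D C' \<psi>"
  shows "\<exists>Z'. zariski_closed C Z' \<and> (\<forall>p. p \<in> Z' \<longleftrightarrow> D p = 0 \<or> \<psi> p \<in> Z)"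
proof -
  obtain A where A: "A \<subseteq> poly_funs C'" and Z_eq: "Z = {q. \<forall>g\<in>A. g q = 0}"
    using Z unfolding zariski_closed_def by blast
  define pulled where "pulled g P \<longleftrightarrow> P \<in> poly_funs C \<and>
      (\<exists>n. \<forall>p. D p \<noteq> 0 \<longrightarrow> P p = D p ^ n * g (\<psi> p))" for g P
  have pulled_ex: "\<exists>P. pulled g P" if g: "g \<in> A" for g
  proof -
    obtain n P where "P \<in> poly_funs C" "\<forall>p. D p \<noteq> 0 \<longrightarrow> P p = D p ^ n * g (\<psi> p)"
      using poly_funs_rational_pullback[OF subsetD[OF A g] \<psi> D] by blast
    then show ?thesis unfolding pulled_def by blast
  qed
  have pulled_zero: "P p = 0 \<longleftrightarrow> g (\<psi> p) = 0" if "pulled g P" "D p \<noteq> 0" for g P p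
    using that unfolding pulled_def by auto
  \<comment> \<open>The factor D makes the equations vanish where D does.\<close>
  define F where "F = (\<lambda>(g, P) p. D p * P p) ` {(g, P). g \<in> A \<and> pulled g P}"
  have "F \<subseteq> poly_funs C"
    unfolding F_def pulled_def using D by (auto intro: poly_funs.mult)
  moreover have "(\<forall>G\<in>F. G p = 0) \<longleftrightarrow> D p = 0 \<or> \<psi> p \<in> Z" for p
  proof (cases "D p = 0")
    case True
    then show ?thesis unfolding F_def by auto
  next
    case False
    have "(\<forall>G\<in>F. G p = 0) \<longleftrightarrow> (\<forall>g\<in>A. \<forall>P. pulled g P \<longrightarrow> D p * P p = 0)"
      unfolding F_def by auto
    also have "\<dots> \<longleftrightarrow> (\<forall>g\<in>A. \<forall>P. pulled g P \<longrightarrow> P p = 0)"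
      using False by simp
    also have "\<dots> \<longleftrightarrow> (\<forall>g\<in>A. g (\<psi> p) = 0)"
      using pulled_ex pulled_zero[OF _ False] by metis
    finally show ?thesis using False unfolding Z_eq by simp
  qed
  ultimately show ?thesis unfolding zariski_closed_def
    by (intro exI[of _ "{p. \<forall>G\<in>F. G p = 0}"]) auto
qed

theorem irreducible_var_rational_retract:
  fixes D :: "'p \<Rightarrow> 'k::idom" and \<psi> :: "'p \<Rightarrow> 'q"
    and \<sigma> :: "'q \<Rightarrow> 'p"
  assumes X: "irreducible_var C X" and D: "D \<in> poly_funs C"
    and \<psi>_rational: "rational_map C D C' \<psi>"
    and \<psi>_into: "\<And>p. p \<in> X \<Longrightarrow> D p \<noteq> 0 \<Longrightarrow> \<psi> p \<in> Y"
    and \<sigma>_into: "\<And>y. y \<in> Y \<Longrightarrow> \<sigma> y \<in> X \<and> D (\<sigma> y) \<noteq> 0"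
    and \<psi>_\<sigma>: "\<And>y c. y \<in> Y \<Longrightarrow> c \<in> C' \<Longrightarrow> c (\<psi> (\<sigma> y)) = c y"
    and "Y \<noteq> {}"
  shows "irreducible_var C' Y"
  unfolding irreducible_var_def
proof (intro conjI allI impI)
  fix Z1 Z2 assume Z: "zariski_closed C' Z1 \<and> zariski_closed C' Z2 \<and> Y \<subseteq> Z1 \<union> Z2"
  have pullback: "Y \<subseteq> Z" if "zariski_closed C' Z" "zariski_closed C Z'"
      "\<And>p. p \<in> Z' \<longleftrightarrow> D p = 0 \<or> \<psi> p \<in> Z" "X \<subseteq> Z'" for Z Z'
  proof
    fix y assume y: "y \<in> Y"
    then have "\<psi> (\<sigma> y) \<in> Z" using that(3,4) \<sigma>_into by blast
    then show "y \<in> Z"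
      using zariski_closed_eq_if_coords_eq[OF that(1)] \<psi>_\<sigma>[OF y] by blast
  qed
  obtain Z1' where Z1': "zariski_closed C Z1'" "\<And>p. p \<in> Z1' \<longleftrightarrow> D p = 0 \<or> \<psi> p \<in> Z1"
    using zariski_closed_rational_preimage[OF _ D \<psi>_rational] Z
      by blast
  obtain Z2' where Z2': "zariski_closed C Z2'" "\<And>p. p \<in> Z2' \<longleftrightarrow> D p = 0 \<or> \<psi> p \<in> Z2"
    using zariski_closed_rational_preimage[OF _ D \<psi>_rational] Z
      by blast
  have "X \<subseteq> Z1' \<union> Z2'"
  proof
    fix p assume "p \<in> X"
    then have "D p = 0 \<or> \<psi> p \<in> Z1 \<union> Z2" using Z \<psi>_into by blast
    then show "p \<in> Z1' \<union> Z2'" using Z1'(2) Z2'(2) by auto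
  qed
  then have "X \<subseteq> Z1' \<or> X \<subseteq> Z2'"
    using X Z1'(1) Z2'(1) unfolding irreducible_var_def by blast
  then show "Y \<subseteq> Z1 \<or> Y \<subseteq> Z2"
    using pullback[OF _ Z1'] pullback[OF _ Z2'] Z by blast
qed fact

definition poly_mat :: "('p \<Rightarrow> 'k::comm_ring_1) set \<Rightarrow> nat \<Rightarrow> nat \<Rightarrow> ('p \<Rightarrow> 'k mat) \<Rightarrow> bool" where
  "poly_mat C n m M \<longleftrightarrow> (\<forall>p. M p \<in> carrier_mat n m) \<and> (\<forall>i<n. \<forall>j<m. (\<lambda>p. M p $$ (i,j)) \<in> poly_funs C)"

lemma poly_matD: "poly_mat C n m M \<Longrightarrow> i < n \<Longrightarrow> j < m \<Longrightarrow> (\<lambda>p. M p $$ (i,j)) \<in> poly_funs C"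
  "poly_mat C n m M \<Longrightarrow> M p \<in> carrier_mat n m"
  unfolding poly_mat_def by auto

lemma poly_mat_mult:
  assumes "poly_mat C n k M" "poly_mat C k m N"
  shows "poly_mat C n m (\<lambda>p. M p * N p)"
  unfolding poly_mat_def
proof (intro conjI allI impI)
  fix p show "M p * N p \<in> carrier_mat n m"
    using poly_matD(2)[OF assms(1), of p] poly_matD(2)[OF assms(2), of p] by (rule mult_carrier_mat)
next
  fix i j assume ij: "i < n" "j < m"
  have "(\<lambda>p. (M p * N p) $$ (i,j)) = (\<lambda>p. \<Sum>l\<in>{0..<k}. M p $$ (i,l) * N p $$ (l,j))"
  proof
    fix p
    have c: "M p \<in> carrier_mat n k" "N p \<in> carrier_mat k m"
      using poly_matD(2)[OF assms(1)] poly_matD(2)[OF assms(2)] by auto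
    show "(M p * N p) $$ (i,j) = (\<Sum>l\<in>{0..<k}. M p $$ (i,l) * N p $$ (l,j))"
      using c ij by (auto simp: scalar_prod_def intro!: sum.cong)
  qed
  also have "\<dots> \<in> poly_funs C"
    by (intro poly_funs_sum poly_funs.mult poly_matD[OF assms(1)] poly_matD[OF assms(2)]) (use ij in auto)
  finally show "(\<lambda>p. (M p * N p) $$ (i,j)) \<in> poly_funs C" .
qed

lemma poly_mat_det:
  assumes "poly_mat C n n M"
  shows "(\<lambda>p. det (M p)) \<in> poly_funs C"
proof -
  have "(\<lambda>p. det (M p)) = (\<lambda>p. \<Sum>\<pi>\<in>{\<pi>. \<pi> permutes {0..<n}}. signof \<pi> * (\<Prod>i = 0..<n. M p $$ (i, \<pi> i)))"
    using poly_matD(2)[OF assms] by (auto simp: det_def')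
  also have "\<dots> \<in> poly_funs C"
  proof (intro poly_funs_sum poly_funs_cmult poly_funs_prod)
    show "finite {\<pi>. \<pi> permutes {0..<n}}" by (simp add: finite_permutations)
  next
    fix \<pi> i assume "\<pi> \<in> {\<pi>. \<pi> permutes {0..<n}}" "i \<in> {0..<n}"
    then show "(\<lambda>p. M p $$ (i, \<pi> i)) \<in> poly_funs C"
      by (intro poly_matD[OF assms]) (auto simp: permutes_in_image)
  qed simp
  finally show ?thesis .
qed

lemma poly_mat_mat_delete:
  assumes "poly_mat C (Suc n) (Suc n) M" "i < Suc n" "j < Suc n"
  shows "poly_mat C n n (\<lambda>p. mat_delete (M p) i j)"
  unfolding poly_mat_def
proof (intro conjI allI impI)
  fix p show "mat_delete (M p) i j \<in> carrier_mat n n"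
    using mat_delete_carrier[OF poly_matD(2)[OF assms(1), of p]] by simp
next
  fix a b assume ab: "a < n" "b < n"
  have "(\<lambda>p. mat_delete (M p) i j $$ (a,b)) = (\<lambda>p. M p $$ (if a < i then a else Suc a, if b < j then b else Suc b))"
  proof
    fix p have "M p \<in> carrier_mat (Suc n) (Suc n)" by (rule poly_matD(2)[OF assms(1)])
    then show "mat_delete (M p) i j $$ (a,b) = M p $$ (if a < i then a else Suc a, if b < j then b else Suc b)"
      using ab unfolding mat_delete_def by simp
  qed
  also have "\<dots> \<in> poly_funs C" by (rule poly_matD(1)[OF assms(1)]) (use ab in auto)
  finally show "(\<lambda>p. mat_delete (M p) i j $$ (a,b)) \<in> poly_funs C" .
qed

lemma poly_mat_adj:
  assumes "poly_mat C n n M"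
  shows "poly_mat C n n (\<lambda>p. adj_mat (M p))"
  unfolding poly_mat_def
proof (intro conjI allI impI)
  fix p show "adj_mat (M p) \<in> carrier_mat n n" using adj_mat(1) poly_matD(2)[OF assms] by blast
next
  fix i j assume ij: "i < n" "j < n"
  then obtain m where m: "n = Suc m" by (cases n) auto
  have "(\<lambda>p. adj_mat (M p) $$ (i,j)) = (\<lambda>p. (-1)^(j+i) * det (mat_delete (M p) j i))"
  proof
    fix p have "M p \<in> carrier_mat n n" by (rule poly_matD(2)[OF assms])
    then show "adj_mat (M p) $$ (i,j) = (-1)^(j+i) * det (mat_delete (M p) j i)"
      using ij by (simp add: adj_mat_def cofactor_def)
  qed
  also have "\<dots> \<in> poly_funs C"
    using poly_mat_det[OF poly_mat_mat_delete[of C m M j i]] assms ij m by (intro poly_funs_cmult) auto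
  finally show "(\<lambda>p. adj_mat (M p) $$ (i,j)) \<in> poly_funs C" .
qed

lemma poly_mat_four_block:
  assumes "poly_mat C n1 m1 A" "poly_mat C n1 m2 B" "poly_mat C n2 m1 E" "poly_mat C n2 m2 F"
  shows "poly_mat C (n1+n2) (m1+m2) (\<lambda>p. four_block_mat (A p) (B p) (E p) (F p))"
  unfolding poly_mat_def
proof (intro conjI allI impI)
  fix p show "four_block_mat (A p) (B p) (E p) (F p) \<in> carrier_mat (n1+n2) (m1+m2)"
    using poly_matD(2)[OF assms(1), of p] poly_matD(2)[OF assms(4), of p] by simp
next
  fix i j assume ij: "i < n1+n2" "j < m1+m2"
  have "(\<lambda>p. four_block_mat (A p) (B p) (E p) (F p) $$ (i,j)) = (\<lambda>p. if i < n1 then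
      if j < m1 then A p $$ (i,j) else B p $$ (i,j - m1)
      else if j < m1 then E p $$ (i - n1, j) else F p $$ (i - n1, j - m1))"
  proof
    fix p
    have c: "A p \<in> carrier_mat n1 m1" "F p \<in> carrier_mat n2 m2"
      using poly_matD(2)[OF assms(1), of p] poly_matD(2)[OF assms(4), of p] by auto
    show "four_block_mat (A p) (B p) (E p) (F p) $$ (i,j) = (if i < n1 then
      if j < m1 then A p $$ (i,j) else B p $$ (i,j - m1)
      else if j < m1 then E p $$ (i - n1, j) else F p $$ (i - n1, j - m1))"
      using c ij by (subst index_mat_four_block) auto
  qed
  also have "\<dots> \<in> poly_funs C"
    using ij by (cases "i < n1"; cases "j < m1") (auto intro!: poly_matD(1)[OF assms(1)] poly_matD(1)[OF assms(2)] poly_matD(1)[OF assms(3)] poly_matD(1)[OF assms(4)])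
  finally show "(\<lambda>p. four_block_mat (A p) (B p) (E p) (F p) $$ (i,j)) \<in> poly_funs C" .
qed

lemma poly_mat_mat:
  assumes "\<And>i j. i < n \<Longrightarrow> j < m \<Longrightarrow> (\<lambda>p. h p i j) \<in> poly_funs C"
  shows "poly_mat C n m (\<lambda>p. mat n m (\<lambda>(i,j). h p i j))"
  using assms unfolding poly_mat_def by auto

lemma poly_mat_smult:
  assumes "poly_mat C n m A" "s \<in> poly_funs C"
  shows "poly_mat C n m (\<lambda>p. s p \<cdot>\<^sub>m A p)"
  unfolding poly_mat_def
proof (intro conjI allI impI)
  fix p show "s p \<cdot>\<^sub>m A p \<in> carrier_mat n m" using poly_matD(2)[OF assms(1), of p]
    by simp
next
  fix i j assume ij: "i < n" "j < m"
  have "(\<lambda>p. (s p \<cdot>\<^sub>m A p) $$ (i,j)) = (\<lambda>p. s p * A p $$ (i,j))"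
  proof
    fix p show "(s p \<cdot>\<^sub>m A p) $$ (i,j) = s p * A p $$ (i,j)"
      using poly_matD(2)[OF assms(1), of p] ij by simp
  qed
  also have "\<dots> \<in> poly_funs C" by (intro poly_funs.mult assms(2) poly_matD(1)[OF assms(1)] ij)
  finally show "(\<lambda>p. (s p \<cdot>\<^sub>m A p) $$ (i,j)) \<in> poly_funs C" .
qed

lemma poly_mat_uminus:
  assumes "poly_mat C n m A"
  shows "poly_mat C n m (\<lambda>p. - A p)"
  unfolding poly_mat_def
proof (intro conjI allI impI)
  fix p show "- A p \<in> carrier_mat n m" using poly_matD(2)[OF assms(1), of p] by simp
next
  fix i j assume ij: "i < n" "j < m"
  have "(\<lambda>p. (- A p) $$ (i,j)) = (\<lambda>p. - A p $$ (i,j))"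
  proof
    fix p show "(- A p) $$ (i,j) = - A p $$ (i,j)"
      using poly_matD(2)[OF assms(1), of p] ij by simp
  qed
  also have "\<dots> \<in> poly_funs C" by (intro poly_funs_uminus poly_matD(1)[OF assms(1)] ij)
  finally show "(\<lambda>p. (- A p) $$ (i,j)) \<in> poly_funs C" .
qed

lemma poly_mat_one: "poly_mat C n n (\<lambda>p. 1\<^sub>m n)"
  unfolding poly_mat_def by (auto intro: poly_funs.const)

lemma poly_mat_zero: "poly_mat C n m (\<lambda>p. 0\<^sub>m n m)"
  unfolding poly_mat_def by (auto intro: poly_funs.const)

lemma pathmat_carrier:
  assumes "chain_ok Q x cs" "\<And>a. a < narrs Q \<Longrightarrow> V a \<in> carrier_mat (D (tgt Q a)) (D (src Q a))"
  shows "pathmat Q D V x cs \<in> carrier_mat (D (pend Q x cs)) (D x)"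
  using assms(1)
proof (induction cs arbitrary: x)
  case Nil then show ?case by simp
next
  case (Cons a as)
  then have a: "a < narrs Q" "src Q a = x" "chain_ok Q (tgt Q a) as" by auto
  have "pathmat Q D V (tgt Q a) as \<in> carrier_mat (D (pend Q (tgt Q a) as)) (D (tgt Q a))"
    using Cons.IH a(3) by blast
  moreover have "V a \<in> carrier_mat (D (tgt Q a)) (D x)" using assms(2)[OF a(1)] a(2) by simp
  ultimately show ?case by simp
qed

lemma pend_less_nverts:
  assumes "wf_quiver Q" "x < nverts Q" "chain_ok Q x cs"
  shows "pend Q x cs < nverts Q"
  using assms(2,3) by (induction cs arbitrary: x) (use assms(1) in \<open>auto simp: wf_quiver_def\<close>)

lemma mult_mat_cancel_inner:
  fixes Gy :: "'k::field mat"
  assumes "Gy \<in> carrier_mat ny ny" "P \<in> carrier_mat ny nt" "Gt \<in> carrier_mat nt nt" "Git \<in> carrier_mat nt nt"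
    "Wa \<in> carrier_mat nt nx" "Gx \<in> carrier_mat nx nx" "Gt * Git = 1\<^sub>m nt"
  shows "(Gy * P * Gt) * (Git * Wa * Gx) = Gy * (P * Wa) * Gx"
proof -
  have c1: "Gy * P * Gt \<in> carrier_mat ny nt" using assms by simp
  have c2: "Git * Wa \<in> carrier_mat nt nx" using assms by simp
  have "(Gy * P * Gt) * (Git * Wa * Gx) = ((Gy * P * Gt) * (Git * Wa)) * Gx"
    using assoc_mult_mat[OF c1 c2 assms(6)] by simp
  also have "(Gy * P * Gt) * (Git * Wa) = ((Gy * P * Gt) * Git) * Wa"
    using assoc_mult_mat[OF c1 assms(4) assms(5)] by simp
  also have "(Gy * P * Gt) * Git = (Gy * P) * (Gt * Git)"
    using assoc_mult_mat[OF _ assms(3) assms(4), of "Gy * P" ny] assms by simp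
  also have "\<dots> = Gy * P" using assms by simp
  also have "Gy * P * Wa = Gy * (P * Wa)" using assoc_mult_mat[OF assms(1,2,5)] .
  finally show ?thesis .
qed

lemma pathmat_conjugate:
  fixes W :: "nat \<Rightarrow> 'k::field mat"
  assumes wf: "wf_quiver Q" and x: "x < nverts Q" and ch: "chain_ok Q x cs"
    and W: "\<And>a. a < narrs Q \<Longrightarrow> W a \<in> carrier_mat (N (tgt Q a)) (N (src Q a))"
    and G: "\<And>y. y < nverts Q \<Longrightarrow> G y \<in> carrier_mat (N y) (N y)"
    and Gi: "\<And>y. y < nverts Q \<Longrightarrow> Gi y \<in> carrier_mat (N y) (N y)"
    and inv1: "\<And>y. y < nverts Q \<Longrightarrow> Gi y * G y = 1\<^sub>m (N y)"
    and inv2: "\<And>y. y < nverts Q \<Longrightarrow> G y * Gi y = 1\<^sub>m (N y)"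
    and W': "\<And>a. a < narrs Q \<Longrightarrow> W' a = Gi (tgt Q a) * W a * G (src Q a)"
  shows "pathmat Q N W' x cs = Gi (pend Q x cs) * pathmat Q N W x cs * G x"
  using x ch
proof (induction cs arbitrary: x)
  case Nil
  have "Gi x * 1\<^sub>m (N x) * G x = Gi x * G x" using Gi[OF Nil(1)] by simp
  then show ?case using inv1[OF Nil(1)] by simp
next
  case (Cons a as)
  then have a: "a < narrs Q" "src Q a = x" "chain_ok Q (tgt Q a) as" by auto
  let ?t = "tgt Q a" let ?y = "pend Q ?t as"
  have t: "?t < nverts Q" using wf a(1) by (auto simp: wf_quiver_def)
  have y: "?y < nverts Q" using pend_less_nverts[OF wf t a(3)] .
  have "pathmat Q N W' x (a # as) = pathmat Q N W' ?t as * W' a" by simp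
  also have "\<dots> = (Gi ?y * pathmat Q N W ?t as * G ?t) * (Gi ?t * W a * G x)"
    using Cons.IH[OF t a(3)] W'[OF a(1)] a(2) by simp
  also have "\<dots> = Gi ?y * (pathmat Q N W ?t as * W a) * G x"
  proof -
    have Wa: "W a \<in> carrier_mat (N ?t) (N x)" using W[OF a(1)] a(2) by simp
    show ?thesis
      by (rule mult_mat_cancel_inner[OF Gi[OF y] pathmat_carrier[OF a(3) W] G[OF t] Gi[OF t] Wa G[OF Cons(2)] inv2[OF t]])
  qed
  finally show ?case by simp
qed

lemma index_mult_mat_mult_mat:
  fixes A :: "'k::field mat"
  assumes "A \<in> carrier_mat n1 n2" "P \<in> carrier_mat n2 n3" "B \<in> carrier_mat n3 n4" "i < n1" "j < n4"
  shows "(A * P * B) $$ (i,j) = (\<Sum>k\<in>{0..<n2}. \<Sum>l\<in>{0..<n3}. A $$ (i,k) * P $$ (k,l) * B $$ (l,j))"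
proof -
  have "(A * P * B) $$ (i,j) = (\<Sum>l\<in>{0..<n3}. (A * P) $$ (i,l) * B $$ (l,j))"
    using assms by (simp add: scalar_prod_def del: assoc_mult_mat)
  also have "\<dots> = (\<Sum>l\<in>{0..<n3}. (\<Sum>k\<in>{0..<n2}. A $$ (i,k) * P $$ (k,l)) * B $$ (l,j))"
    using assms by (intro sum.cong refl) (simp add: scalar_prod_def)
  also have "\<dots> = (\<Sum>l\<in>{0..<n3}. \<Sum>k\<in>{0..<n2}. A $$ (i,k) * P $$ (k,l) * B $$ (l,j))"
    by (simp add: sum_distrib_right)
  also have "\<dots> = (\<Sum>k\<in>{0..<n2}. \<Sum>l\<in>{0..<n3}. A $$ (i,k) * P $$ (k,l) * B $$ (l,j))"
    by (rule sum.swap)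
  finally show ?thesis .
qed

lemma admissible_support:
  assumes "admissible Q I" "\<rho> \<in> I" "\<rho> p \<noteq> 0"
  shows "chain_ok Q (fst p) (snd p)" "length (snd p) \<ge> 2"
proof -
  have "\<rho> \<in> {f. in_kQ Q f}" using assms(1,2) by (auto simp: admissible_def kq_ideal_def)
  then show "chain_ok Q (fst p) (snd p)" using assms(3) by (auto simp: in_kQ_def is_path_def)
  have "\<rho> \<in> arrow_ideal_pow Q 2" using assms(1,2) by (auto simp: admissible_def)
  then show "length (snd p) \<ge> 2" using assms(3) by (cases p) (auto simp: arrow_ideal_pow_def)
qed

lemma satisfies_rels_conjugate:
  fixes W :: "nat \<Rightarrow> 'k::field mat"
  assumes adm: "admissible Q I" and wf: "wf_quiver Q" and rel: "satisfies_rels Q I N W"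
    and W: "\<And>a. a < narrs Q \<Longrightarrow> W a \<in> carrier_mat (N (tgt Q a)) (N (src Q a))"
    and G: "\<And>y. y < nverts Q \<Longrightarrow> G y \<in> carrier_mat (N y) (N y)"
    and Gi: "\<And>y. y < nverts Q \<Longrightarrow> Gi y \<in> carrier_mat (N y) (N y)"
    and inv1: "\<And>y. y < nverts Q \<Longrightarrow> Gi y * G y = 1\<^sub>m (N y)"
    and inv2: "\<And>y. y < nverts Q \<Longrightarrow> G y * Gi y = 1\<^sub>m (N y)"
    and W': "\<And>a. a < narrs Q \<Longrightarrow> W' a = Gi (tgt Q a) * W a * G (src Q a)"
  shows "satisfies_rels Q I N W'"
  unfolding satisfies_rels_def
proof (intro ballI allI impI)
  fix \<rho> x y i j assume \<rho>: "\<rho> \<in> I" and x: "x < nverts Q" and y: "y < nverts Q"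
    and i: "i < N y" and j: "j < N x"
  let ?S = "{p. \<rho> p \<noteq> 0 \<and> fst p = x \<and> pend Q x (snd p) = y}"
  have chS: "chain_ok Q x (snd p)" if "p \<in> ?S" for p
    using admissible_support(1)[OF adm \<rho>, of p] that by auto
  have "(\<Sum>p\<in>?S. \<rho> p * pathmat Q N W' x (snd p) $$ (i, j))
      = (\<Sum>p\<in>?S. \<rho> p * (\<Sum>k\<in>{0..<N y}. \<Sum>l\<in>{0..<N x}. Gi y $$ (i,k) * pathmat Q N W x (snd p) $$ (k,l) * G x $$ (l,j)))"
  proof (intro sum.cong refl)
    fix p assume p: "p \<in> ?S"
    have "pathmat Q N W' x (snd p) = Gi y * pathmat Q N W x (snd p) * G x"
      using pathmat_conjugate[OF wf x chS[OF p] W G Gi inv1 inv2 W'] p by auto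
    moreover have "pathmat Q N W x (snd p) \<in> carrier_mat (N y) (N x)"
      using pathmat_carrier[OF chS[OF p] W] p by auto
    ultimately show "\<rho> p * pathmat Q N W' x (snd p) $$ (i, j) = \<rho> p * (\<Sum>k\<in>{0..<N y}. \<Sum>l\<in>{0..<N x}. Gi y $$ (i,k) * pathmat Q N W x (snd p) $$ (k,l) * G x $$ (l,j))"
      using index_mult_mat_mult_mat[OF Gi[OF y] _ G[OF x] i j] by simp
  qed
  also have "\<dots> = (\<Sum>k\<in>{0..<N y}. \<Sum>l\<in>{0..<N x}. Gi y $$ (i,k) * G x $$ (l,j) * (\<Sum>p\<in>?S. \<rho> p * pathmat Q N W x (snd p) $$ (k,l)))"
    by (simp add: sum_distrib_left sum.swap[of _ ?S] mult_ac)
  also have "\<dots> = 0"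
    using rel \<rho> x y unfolding satisfies_rels_def by (intro sum.neutral ballI) simp
  finally show "(\<Sum>p\<in>?S. \<rho> p * pathmat Q N W' x (snd p) $$ (i, j)) = 0" .
qed

lemma pathmat_block_rep:
  fixes V :: "nat \<Rightarrow> 'k::field mat"
  assumes ch: "chain_ok Q x cs"
    and V: "\<And>a. a < narrs Q \<Longrightarrow> V a \<in> carrier_mat (d (tgt Q a)) (d (src Q a))"
    and U: "\<And>a. a < narrs Q \<Longrightarrow> U a \<in> carrier_mat (e (tgt Q a)) (e (src Q a))"
    and Z: "\<And>a. a < narrs Q \<Longrightarrow> Z a \<in> carrier_mat (d (tgt Q a)) (e (src Q a))"
  shows "\<exists>B. B \<in> carrier_mat (d (pend Q x cs)) (e x) \<and>
    pathmat Q (\<lambda>x. d x + e x) (block_rep Q e d V Z U) x cs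
     = four_block_mat (pathmat Q d V x cs) B (0\<^sub>m (e (pend Q x cs)) (d x)) (pathmat Q e U x cs)"
  using ch
proof (induction cs arbitrary: x)
  case Nil
  show ?case by (rule exI[of _ "0\<^sub>m (d x) (e x)"]) simp
next
  case (Cons a as)
  then have a: "a < narrs Q" "src Q a = x" "chain_ok Q (tgt Q a) as" by auto
  let ?t = "tgt Q a" let ?y = "pend Q ?t as"
  from Cons.IH[OF a(3)] obtain B where B: "B \<in> carrier_mat (d ?y) (e ?t)"
    "pathmat Q (\<lambda>x. d x + e x) (block_rep Q e d V Z U) ?t as
     = four_block_mat (pathmat Q d V ?t as) B (0\<^sub>m (e ?y) (d ?t)) (pathmat Q e U ?t as)" by blast
  have Pv: "pathmat Q d V ?t as \<in> carrier_mat (d ?y) (d ?t)" by (rule pathmat_carrier[OF a(3) V])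
  have Pu: "pathmat Q e U ?t as \<in> carrier_mat (e ?y) (e ?t)" by (rule pathmat_carrier[OF a(3) U])
  have Va: "V a \<in> carrier_mat (d ?t) (d x)" using V[OF a(1)] a(2) by simp
  have Ua: "U a \<in> carrier_mat (e ?t) (e x)" using U[OF a(1)] a(2) by simp
  have Za: "Z a \<in> carrier_mat (d ?t) (e x)" using Z[OF a(1)] a(2) by simp
  have "pathmat Q (\<lambda>x. d x + e x) (block_rep Q e d V Z U) x (a # as)
     = four_block_mat (pathmat Q d V ?t as) B (0\<^sub>m (e ?y) (d ?t)) (pathmat Q e U ?t as)
       * four_block_mat (V a) (Z a) (0\<^sub>m (e ?t) (d x)) (U a)"
    using B(2) a(2) by (simp add: block_rep_def)
  also have "\<dots> = four_block_mat (pathmat Q d V ?t as * V a + B * 0\<^sub>m (e ?t) (d x))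
      (pathmat Q d V ?t as * Z a + B * U a)
      (0\<^sub>m (e ?y) (d ?t) * V a + pathmat Q e U ?t as * 0\<^sub>m (e ?t) (d x))
      (0\<^sub>m (e ?y) (d ?t) * Z a + pathmat Q e U ?t as * U a)"
    by (rule mult_four_block_mat[OF Pv B(1) _ Pu Va Za _ Ua]) auto
  also have "\<dots> = four_block_mat (pathmat Q d V ?t as * V a) (pathmat Q d V ?t as * Z a + B * U a)
      (0\<^sub>m (e ?y) (d x)) (pathmat Q e U ?t as * U a)"
    using Pv Pu Va Ua Za B(1) by (simp add: right_mult_zero_mat left_mult_zero_mat)
  finally show ?case
    using Pv Pu Va Ua Za B(1) by (intro exI[of _ "pathmat Q d V ?t as * Z a + B * U a"]) simp
qed

lemma satisfies_rels_block_rep_lower: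
  fixes V :: "nat \<Rightarrow> 'k::field mat"
  assumes adm: "admissible Q I"
    and rel: "satisfies_rels Q I (\<lambda>x. d x + e x) (block_rep Q e d V Z U)"
    and V: "\<And>a. a < narrs Q \<Longrightarrow> V a \<in> carrier_mat (d (tgt Q a)) (d (src Q a))"
    and U: "\<And>a. a < narrs Q \<Longrightarrow> U a \<in> carrier_mat (e (tgt Q a)) (e (src Q a))"
    and Z: "\<And>a. a < narrs Q \<Longrightarrow> Z a \<in> carrier_mat (d (tgt Q a)) (e (src Q a))"
  shows "satisfies_rels Q I e U"
  unfolding satisfies_rels_def
proof (intro ballI allI impI)
  fix \<rho> x y i j assume \<rho>: "\<rho> \<in> I" and x: "x < nverts Q" and y: "y < nverts Q"
    and i: "i < e y" and j: "j < e x"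
  let ?S = "{p. \<rho> p \<noteq> 0 \<and> fst p = x \<and> pend Q x (snd p) = y}"
  have chS: "chain_ok Q x (snd p)" if "p \<in> ?S" for p
    using admissible_support(1)[OF adm \<rho>, of p] that by auto
  have "(\<Sum>p\<in>?S. \<rho> p * pathmat Q e U x (snd p) $$ (i, j))
     = (\<Sum>p\<in>?S. \<rho> p * pathmat Q (\<lambda>x. d x + e x) (block_rep Q e d V Z U) x (snd p) $$ (d y + i, d x + j))"
  proof (intro sum.cong refl)
    fix p assume p: "p \<in> ?S"
    obtain B where B: "B \<in> carrier_mat (d y) (e x)"
      "pathmat Q (\<lambda>x. d x + e x) (block_rep Q e d V Z U) x (snd p)
     = four_block_mat (pathmat Q d V x (snd p)) B (0\<^sub>m (e y) (d x)) (pathmat Q e U x (snd p))"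
      using pathmat_block_rep[OF chS[OF p] V U Z] p by auto
    have Pv: "pathmat Q d V x (snd p) \<in> carrier_mat (d y) (d x)"
      using pathmat_carrier[OF chS[OF p] V] p by auto
    have Pu: "pathmat Q e U x (snd p) \<in> carrier_mat (e y) (e x)"
      using pathmat_carrier[OF chS[OF p] U] p by auto
    show "\<rho> p * pathmat Q e U x (snd p) $$ (i, j) = \<rho> p * pathmat Q (\<lambda>x. d x + e x) (block_rep Q e d V Z U) x (snd p) $$ (d y + i, d x + j)"
      unfolding B(2) using Pv Pu i j by simp
  qed
  also have "\<dots> = 0" using rel \<rho> x y i j unfolding satisfies_rels_def by simp
  finally show "(\<Sum>p\<in>?S. \<rho> p * pathmat Q e U x (snd p) $$ (i, j)) = 0" .
qed

definition zero_rep :: "quiver \<Rightarrow> (nat \<Rightarrow> nat) \<Rightarrow> nat \<Rightarrow> 'k::field mat" where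
  "zero_rep Q D a = 0\<^sub>m (D (tgt Q a)) (D (src Q a))"

lemma pathmat_zero_rep:
  assumes "chain_ok Q x cs" "cs \<noteq> []"
  shows "pathmat Q D (zero_rep Q D) x cs = 0\<^sub>m (D (pend Q x cs)) (D x)"
proof (cases cs)
  case (Cons a as)
  have "pathmat Q D (zero_rep Q D) (tgt Q a) as \<in> carrier_mat (D (pend Q (tgt Q a) as)) (D (tgt Q a))"
    using assms Cons by (intro pathmat_carrier) (auto simp: zero_rep_def)
  from right_mult_zero_mat[OF this] show ?thesis using Cons assms by (simp add: zero_rep_def)
qed (use assms in simp)

lemma is_rep_zero_rep:
  assumes adm: "admissible Q I"
  shows "is_rep Q I D (zero_rep Q D)"
  unfolding is_rep_def satisfies_rels_def
proof (intro conjI allI impI ballI)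
  fix \<rho> x y i j assume \<rho>: "\<rho> \<in> I" and i: "i < D y" and j: "j < D x"
  let ?S = "{p. \<rho> p \<noteq> 0 \<and> fst p = x \<and> pend Q x (snd p) = y}"
  have zero: "pathmat Q D (zero_rep Q D) x (snd p) = 0\<^sub>m (D y) (D x)" if p: "p \<in> ?S" for p
  proof -
    have "chain_ok Q x (snd p)" "snd p \<noteq> []" using admissible_support[OF adm \<rho>, of p] p
      by auto
    from pathmat_zero_rep[OF this, of D] show ?thesis using p by simp
  qed
  show "(\<Sum>p\<in>?S. \<rho> p * pathmat Q D (zero_rep Q D) x (snd p) $$ (i, j)) = 0"
  proof (intro sum.neutral ballI)
    fix p assume "p \<in> ?S"
    then show "\<rho> p * pathmat Q D (zero_rep Q D) x (snd p) $$ (i, j) = 0"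
      unfolding zero[OF \<open>p \<in> ?S\<close>] using i j by simp
  qed
qed (simp add: zero_rep_def)

lemma ext_var_nonempty:
  assumes adm: "admissible Q I"
  shows "ext_var Q I e d \<noteq> {}"
proof -
  let ?Z = "\<lambda>a. 0\<^sub>m (d (tgt Q a)) (e (src Q a))"
  have "block_rep Q e d (zero_rep Q d) ?Z (zero_rep Q e) = zero_rep Q (\<lambda>x. d x + e x)"
    by (simp add: block_rep_def zero_rep_def fun_eq_iff)
  then have "satisfies_rels Q I (\<lambda>x. d x + e x) (block_rep Q e d (zero_rep Q d) ?Z (zero_rep Q e))"
    using is_rep_zero_rep[OF adm] unfolding is_rep_def by metis
  then have "(zero_rep Q e, zero_rep Q d, ?Z) \<in> ext_var Q I e d"
    using is_rep_zero_rep[OF adm] unfolding ext_var_def by simp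
  then show ?thesis by blast
qed

section \<open>Completing a homomorphism to an invertible matrix\<close>

text \<open>hom_top, hom_bottom and arrow_mat below are rebuilt with \<^const>\<open>mat\<close> so that they
  have the intended dimensions at every point, not only on the variety; \<^const>\<open>poly_mat\<close>
  requires this.\<close>

definition hom_top :: "(nat \<Rightarrow> nat) \<Rightarrow> 'k::field triple \<Rightarrow> nat \<Rightarrow> 'k mat" where
  "hom_top d p x = mat (d x) (d x) (\<lambda>(i,j). snd (snd p) x $$ (i,j))"
definition hom_bottom :: "(nat \<Rightarrow> nat) \<Rightarrow> (nat \<Rightarrow> nat) \<Rightarrow> 'k::field triple \<Rightarrow> nat \<Rightarrow> 'k mat" where
  "hom_bottom d e p x = mat (e x) (d x) (\<lambda>(i,j). snd (snd p) x $$ (d x + i, j))"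
definition hom_top_det :: "(nat \<Rightarrow> nat) \<Rightarrow> 'k::field triple \<Rightarrow> nat \<Rightarrow> 'k" where
  "hom_top_det d p x = det (hom_top d p x)"
definition completion :: "(nat \<Rightarrow> nat) \<Rightarrow> (nat \<Rightarrow> nat) \<Rightarrow> 'k::field triple \<Rightarrow> nat \<Rightarrow> 'k mat" where
  "completion d e p x = four_block_mat (hom_top d p x) (0\<^sub>m (d x) (e x)) (hom_bottom d e p x) (1\<^sub>m (e x))"
definition completion_adj :: "(nat \<Rightarrow> nat) \<Rightarrow> (nat \<Rightarrow> nat) \<Rightarrow> 'k::field triple \<Rightarrow> nat \<Rightarrow> 'k mat" where
  "completion_adj d e p x = four_block_mat (adj_mat (hom_top d p x)) (0\<^sub>m (d x) (e x))
     (- (hom_bottom d e p x * adj_mat (hom_top d p x))) (hom_top_det d p x \<cdot>\<^sub>m 1\<^sub>m (e x))"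
definition completion_inv :: "(nat \<Rightarrow> nat) \<Rightarrow> (nat \<Rightarrow> nat) \<Rightarrow> 'k::field triple \<Rightarrow> nat \<Rightarrow> 'k mat" where
  "completion_inv d e p x = (1 / hom_top_det d p x) \<cdot>\<^sub>m completion_adj d e p x"

lemma hom_top_carrier[simp]: "hom_top d p x \<in> carrier_mat (d x) (d x)" by (simp add: hom_top_def)
lemma hom_bottom_carrier[simp]: "hom_bottom d e p x \<in> carrier_mat (e x) (d x)" by (simp add: hom_bottom_def)
lemma adj_hom_top_carrier[simp]: "adj_mat (hom_top d p x) \<in> carrier_mat (d x) (d x)"
  using adj_mat(1)[OF hom_top_carrier] .
lemma completion_carrier[simp]: "completion d e p x \<in> carrier_mat (d x + e x) (d x + e x)" by (simp add: completion_def)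
lemma completion_adj_carrier[simp]: "completion_adj d e p x \<in> carrier_mat (d x + e x) (d x + e x)" by (simp add: completion_adj_def)
lemma completion_inv_carrier[simp]: "completion_inv d e p x \<in> carrier_mat (d x + e x) (d x + e x)" by (simp add: completion_inv_def)

lemma four_block_adj_mult:
  fixes F1 :: "'k::field mat"
  assumes cF1: "F1 \<in> carrier_mat n n" and cF2: "F2 \<in> carrier_mat m n"
  shows "four_block_mat (adj_mat F1) (0\<^sub>m n m) (- (F2 * adj_mat F1)) (det F1 \<cdot>\<^sub>m 1\<^sub>m m)
       * four_block_mat F1 (0\<^sub>m n m) F2 (1\<^sub>m m) = det F1 \<cdot>\<^sub>m 1\<^sub>m (n + m)"
    (is "four_block_mat ?A _ _ _ * _ = _")
proof -
  have cA: "?A \<in> carrier_mat n n" using adj_mat(1)[OF cF1] .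
  have AF1: "?A * F1 = det F1 \<cdot>\<^sub>m 1\<^sub>m n" using adj_mat(3)[OF cF1] .
  have "- (F2 * ?A) * F1 = - ((F2 * ?A) * F1)"
    by (rule uminus_mult_left_mat) (use cA cF1 cF2 in simp)
  also have "(F2 * ?A) * F1 = F2 * (?A * F1)" using assoc_mult_mat[OF cF2 cA cF1] .
  also have "\<dots> = det F1 \<cdot>\<^sub>m F2"
    unfolding AF1 mult_smult_distrib[OF cF2 one_carrier_mat] using cF2 by simp
  moreover have "(det F1 \<cdot>\<^sub>m 1\<^sub>m m) * F2 = det F1 \<cdot>\<^sub>m F2"
    using mult_smult_assoc_mat[OF one_carrier_mat cF2] cF2 by simp
  ultimately have lower_left: "- (F2 * ?A) * F1 + (det F1 \<cdot>\<^sub>m 1\<^sub>m m) * F2 = 0\<^sub>m m n"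
    using uminus_l_inv_mat[of "det F1 \<cdot>\<^sub>m F2" m n] cF2 by simp
  have "four_block_mat ?A (0\<^sub>m n m) (- (F2 * ?A)) (det F1 \<cdot>\<^sub>m 1\<^sub>m m) * four_block_mat F1 (0\<^sub>m n m) F2 (1\<^sub>m m)
      = four_block_mat (?A * F1 + 0\<^sub>m n m * F2) (?A * 0\<^sub>m n m + 0\<^sub>m n m * 1\<^sub>m m)
          (- (F2 * ?A) * F1 + (det F1 \<cdot>\<^sub>m 1\<^sub>m m) * F2)
          (- (F2 * ?A) * 0\<^sub>m n m + (det F1 \<cdot>\<^sub>m 1\<^sub>m m) * 1\<^sub>m m)"
    by (rule mult_four_block_mat[OF cA zero_carrier_mat _ _ cF1 zero_carrier_mat cF2 one_carrier_mat])
      (use mult_carrier_mat[OF cF2 cA] in auto)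
  also have "\<dots> = four_block_mat (det F1 \<cdot>\<^sub>m 1\<^sub>m n) (0\<^sub>m n m) (0\<^sub>m m n) (det F1 \<cdot>\<^sub>m 1\<^sub>m m)"
    unfolding lower_left AF1 using cA cF2 by simp
  also have "\<dots> = det F1 \<cdot>\<^sub>m 1\<^sub>m (n + m)" by (rule eq_matI) auto
  finally show ?thesis .
qed

lemma completion_adj_mult:
  "completion_adj d e p x * completion d e p x = hom_top_det d p x \<cdot>\<^sub>m 1\<^sub>m (d x + e x)"
  unfolding completion_adj_def completion_def hom_top_det_def
  by (rule four_block_adj_mult) simp_all

lemma completion_inv:
  assumes "hom_top_det d p x \<noteq> 0"
  shows "completion_inv d e p x * completion d e p x = 1\<^sub>m (d x + e x)" "completion d e p x * completion_inv d e p x = 1\<^sub>m (d x + e x)"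
proof -
  have "completion_inv d e p x * completion d e p x = (1 / hom_top_det d p x) \<cdot>\<^sub>m (completion_adj d e p x * completion d e p x)"
    unfolding completion_inv_def
      by (rule mult_smult_assoc_mat[OF completion_adj_carrier completion_carrier])
  also have "\<dots> = 1\<^sub>m (d x + e x)" unfolding completion_adj_mult using assms
    by (intro eq_matI) auto
  finally show 1: "completion_inv d e p x * completion d e p x = 1\<^sub>m (d x + e x)" .
  show "completion d e p x * completion_inv d e p x = 1\<^sub>m (d x + e x)"
    by (rule mat_mult_left_right_inverse[OF completion_inv_carrier completion_carrier 1])
qed

section \<open>From homomorphisms to extensions and back\<close>

definition incl_mat :: "(nat \<Rightarrow> nat) \<Rightarrow> (nat \<Rightarrow> nat) \<Rightarrow> nat \<Rightarrow> 'k::field mat" where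
  "incl_mat d e x = mat (d x + e x) (d x) (\<lambda>(i,j). if i = j then 1 else 0)"

definition arrow_mat :: "quiver \<Rightarrow> (nat \<Rightarrow> nat) \<Rightarrow> (nat \<Rightarrow> nat) \<Rightarrow> 'k::field triple \<Rightarrow> nat \<Rightarrow> 'k mat" where
  "arrow_mat Q d e p a = mat (d (tgt Q a) + e (tgt Q a)) (d (src Q a) + e (src Q a)) (\<lambda>(i,j). fst (snd p) a $$ (i,j))"

definition conj_arrow :: "quiver \<Rightarrow> (nat \<Rightarrow> nat) \<Rightarrow> (nat \<Rightarrow> nat) \<Rightarrow> 'k::field triple \<Rightarrow> nat \<Rightarrow> 'k mat" where
  "conj_arrow Q d e p a = completion_inv d e p (tgt Q a) * arrow_mat Q d e p a * completion d e p (src Q a)"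

definition conj_lower :: "quiver \<Rightarrow> (nat \<Rightarrow> nat) \<Rightarrow> (nat \<Rightarrow> nat) \<Rightarrow> 'k::field triple \<Rightarrow> nat \<Rightarrow> 'k mat" where
  "conj_lower Q d e p a = mat (e (tgt Q a)) (e (src Q a)) (\<lambda>(i,j). conj_arrow Q d e p a $$ (d (tgt Q a) + i, d (src Q a) + j))"

definition conj_corner :: "quiver \<Rightarrow> (nat \<Rightarrow> nat) \<Rightarrow> (nat \<Rightarrow> nat) \<Rightarrow> 'k::field triple \<Rightarrow> nat \<Rightarrow> 'k mat" where
  "conj_corner Q d e p a = mat (d (tgt Q a)) (e (src Q a)) (\<lambda>(i,j). conj_arrow Q d e p a $$ (i, d (src Q a) + j))"

definition ext_of_hom :: "quiver \<Rightarrow> (nat \<Rightarrow> nat) \<Rightarrow> (nat \<Rightarrow> nat) \<Rightarrow> 'k::field triple \<Rightarrow> 'k triple" where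
  "ext_of_hom Q d e p = (conj_lower Q d e p, fst p, conj_corner Q d e p)"

definition top_dets :: "quiver \<Rightarrow> (nat \<Rightarrow> nat) \<Rightarrow> 'k::field triple \<Rightarrow> 'k" where
  "top_dets Q d p = (\<Prod>x<nverts Q. hom_top_det d p x)"

lemma incl_mat_carrier[simp]: "incl_mat d e x \<in> carrier_mat (d x + e x) (d x)" by (simp add: incl_mat_def)
lemma arrow_mat_carrier[simp]: "arrow_mat Q d e p a \<in> carrier_mat (d (tgt Q a) + e (tgt Q a)) (d (src Q a) + e (src Q a))"
  by (simp add: arrow_mat_def)
lemma conj_arrow_carrier[simp]: "conj_arrow Q d e p a \<in> carrier_mat (d (tgt Q a) + e (tgt Q a)) (d (src Q a) + e (src Q a))"
  unfolding conj_arrow_def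
    by (rule mult_carrier_mat[OF mult_carrier_mat[OF completion_inv_carrier arrow_mat_carrier] completion_carrier])

lemma mult_incl_mat_index:
  assumes "M \<in> carrier_mat n (d x + e x)" "i < n" "j < d x"
  shows "(M * incl_mat d e x) $$ (i,j) = M $$ (i,j)"
proof -
  have "(M * incl_mat d e x) $$ (i,j) = (\<Sum>k\<in>{0..<d x + e x}. M $$ (i,k) * (if k = j then 1 else 0))"
    using assms by (simp add: scalar_prod_def incl_mat_def)
  also have "\<dots> = (\<Sum>k\<in>{0..<d x + e x}. if k = j then M $$ (i,k) else 0)"
    by (intro sum.cong refl) simp
  also have "\<dots> = M $$ (i,j)" using assms(3) by (simp add: sum.delta)
  finally show ?thesis .
qed

lemma incl_mat_mult_index:
  assumes "V \<in> carrier_mat (d x) m" "i < d x + e x" "j < m"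
  shows "(incl_mat d e x * V) $$ (i,j) = (if i < d x then V $$ (i,j) else 0)"
proof -
  have "(incl_mat d e x * V) $$ (i,j) = (\<Sum>k\<in>{0..<d x}. (if i = k then 1 else 0) * V $$ (k,j))"
    using assms by (simp add: scalar_prod_def incl_mat_def)
  also have "\<dots> = (\<Sum>k\<in>{0..<d x}. if i = k then V $$ (k,j) else 0)"
    by (intro sum.cong refl) simp
  also have "\<dots> = (if i < d x then V $$ (i,j) else 0)" by (simp add: sum.delta)
  finally show ?thesis .
qed

lemma completion_incl_mat:
  assumes "snd (snd p) x \<in> carrier_mat (d x + e x) (d x)"
  shows "completion d e p x * incl_mat d e x = snd (snd p) x"
proof (rule eq_matI)
  fix i j assume ij: "i < dim_row (snd (snd p) x)" "j < dim_col (snd (snd p) x)"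
  then have ij': "i < d x + e x" "j < d x" using assms by auto
  have "(completion d e p x * incl_mat d e x) $$ (i,j) = completion d e p x $$ (i,j)"
    by (rule mult_incl_mat_index[where d=d and e=e and x=x]) (use ij' in auto)
  also have "\<dots> = snd (snd p) x $$ (i,j)" using ij'
    by (simp add: completion_def hom_top_def hom_bottom_def)
  finally show "(completion d e p x * incl_mat d e x) $$ (i,j) = snd (snd p) x $$ (i,j)" .
qed (use assms in \<open>auto simp: completion_def incl_mat_def hom_top_def\<close>)

lemma top_dets_nonzero:
  assumes "top_dets Q d p \<noteq> 0" "x < nverts Q"
  shows "hom_top_det d p x \<noteq> 0"
  using assms unfolding top_dets_def by (auto simp: prod_zero_iff)

lemma conjugate_intertwiner:
  fixes W :: "'k::field mat"
  assumes cW: "W \<in> carrier_mat nt ns" and cV: "V \<in> carrier_mat mt ms"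
    and cGs: "Gs \<in> carrier_mat ns ns" and cGt: "Gt \<in> carrier_mat nt nt"
      and cGit: "Git \<in> carrier_mat nt nt"
    and cEs: "Es \<in> carrier_mat ns ms" and cEt: "Et \<in> carrier_mat nt mt"
    and intertwine: "W * (Gs * Es) = (Gt * Et) * V" and inv: "Git * Gt = 1\<^sub>m nt"
  shows "Git * W * Gs * Es = Et * V"
proof -
  have "Git * W * Gs * Es = Git * (W * (Gs * Es))"
    by (simp add: assoc_mult_mat[OF mult_carrier_mat[OF cGit cW] cGs cEs]
        assoc_mult_mat[OF cGit cW mult_carrier_mat[OF cGs cEs]])
  also have "\<dots> = (Git * Gt) * (Et * V)"
    unfolding intertwine
    by (simp add: assoc_mult_mat[OF cGt cEt cV] assoc_mult_mat[OF cGit cGt mult_carrier_mat[OF cEt cV]])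
  also have "\<dots> = Et * V" using inv cEt cV by simp
  finally show ?thesis .
qed

lemma conj_arrow_incl_mat:
  fixes p :: "'k::field triple"
  assumes wf: "wf_quiver Q" and H: "p \<in> hom_var Q I d (\<lambda>x. d x + e x)"
    and D: "top_dets Q d p \<noteq> 0"
    and a: "a < narrs Q"
  shows "conj_arrow Q d e p a * incl_mat d e (src Q a) = incl_mat d e (tgt Q a) * fst p a"
proof -
  obtain V W f where p: "p = (V, W, f)" by (cases p) auto
  let ?s = "src Q a" and ?t = "tgt Q a"
  have st: "?s < nverts Q" "?t < nverts Q" using wf a by (auto simp: wf_quiver_def)
  have Wa: "W a \<in> carrier_mat (d ?t + e ?t) (d ?s + e ?s)"
    and Va: "V a \<in> carrier_mat (d ?t) (d ?s)"
    using H a p by (auto simp: hom_var_def is_rep_def)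
  have f: "f x \<in> carrier_mat (d x + e x) (d x)" if "x < nverts Q" for x
    using H that p by (auto simp: hom_var_def)
  have "W a * f ?s = f ?t * V a" using H a p by (auto simp: hom_var_def)
  then have intertwine:
    "W a * (completion d e p ?s * incl_mat d e ?s) = (completion d e p ?t * incl_mat d e ?t) * V a"
    using completion_incl_mat[of p _ d e] f st p by simp
  have "arrow_mat Q d e p a = W a" using Wa p by (intro eq_matI) (auto simp: arrow_mat_def)
  then show ?thesis
    using conjugate_intertwiner[OF Wa Va completion_carrier[of d e p ?s] completion_carrier[of d e p ?t]
        completion_inv_carrier[of d e p ?t] incl_mat_carrier[of d e ?s] incl_mat_carrier[of d e ?t]
        intertwine completion_inv(1)[OF top_dets_nonzero[OF D st(2)]]] p
    by (simp add: conj_arrow_def)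
qed

lemma conj_arrow_index_left:
  fixes p :: "'k::field triple"
  assumes wf: "wf_quiver Q" and H: "p \<in> hom_var Q I d (\<lambda>x. d x + e x)"
    and D: "top_dets Q d p \<noteq> 0"
    and a: "a < narrs Q" and i: "i < d (tgt Q a) + e (tgt Q a)" and j: "j < d (src Q a)"
  shows "conj_arrow Q d e p a $$ (i,j) = (if i < d (tgt Q a) then fst p a $$ (i,j) else 0)"
proof -
  have Va: "fst p a \<in> carrier_mat (d (tgt Q a)) (d (src Q a))" using H a
    by (auto simp: hom_var_def is_rep_def)
  have "conj_arrow Q d e p a $$ (i,j) = (conj_arrow Q d e p a * incl_mat d e (src Q a)) $$ (i,j)"
    using mult_incl_mat_index[where M="conj_arrow Q d e p a" and n="d (tgt Q a) + e (tgt Q a)" and d=d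
      and e=e and x="src Q a" and i=i and j=j] i j by simp
  also have "\<dots> = (incl_mat d e (tgt Q a) * fst p a) $$ (i,j)"
    by (simp add: conj_arrow_incl_mat[OF wf H D a])
  also have "\<dots> = (if i < d (tgt Q a) then fst p a $$ (i,j) else 0)"
    by (rule incl_mat_mult_index[where d=d and e=e and x="tgt Q a", OF Va i j])
  finally show ?thesis .
qed

lemma conj_lower_carrier[simp]: "conj_lower Q d e p a \<in> carrier_mat (e (tgt Q a)) (e (src Q a))" by (simp add: conj_lower_def)
lemma conj_corner_carrier[simp]: "conj_corner Q d e p a \<in> carrier_mat (d (tgt Q a)) (e (src Q a))" by (simp add: conj_corner_def)

lemma block_rep_conj_arrow:
  fixes p :: "'k::field triple"
  assumes wf: "wf_quiver Q" and H: "p \<in> hom_var Q I d (\<lambda>x. d x + e x)"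
    and D: "top_dets Q d p \<noteq> 0"
    and a: "a < narrs Q"
  shows "block_rep Q e d (fst p) (conj_corner Q d e p) (conj_lower Q d e p) a = conj_arrow Q d e p a"
proof -
  let ?s = "src Q a" and ?t = "tgt Q a"
  have Va: "fst p a \<in> carrier_mat (d ?t) (d ?s)" using H a by (auto simp: hom_var_def is_rep_def)
  show ?thesis
  proof (rule eq_matI)
    fix i j assume "i < dim_row (conj_arrow Q d e p a)" "j < dim_col (conj_arrow Q d e p a)"
    then have i: "i < d ?t + e ?t" and j: "j < d ?s + e ?s" using conj_arrow_carrier[of Q d e p a]
      by auto
    have "block_rep Q e d (fst p) (conj_corner Q d e p) (conj_lower Q d e p) a $$ (i,j)
      = (if i < d ?t then if j < d ?s then fst p a $$ (i,j) else conj_corner Q d e p a $$ (i, j - d ?s)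
         else if j < d ?s then 0\<^sub>m (e ?t) (d ?s) $$ (i - d ?t, j) else conj_lower Q d e p a $$ (i - d ?t, j - d ?s))"
    proof -
      have "dim_row (conj_lower Q d e p a) = e ?t" "dim_col (conj_lower Q d e p a) = e ?s"
        by (simp_all add: conj_lower_def)
      then show ?thesis unfolding block_rep_def using Va i j by (subst index_mat_four_block(1)) auto
    qed
    also have "\<dots> = conj_arrow Q d e p a $$ (i,j)"
    proof (cases "i < d ?t"; cases "j < d ?s")
      assume "i < d ?t" "j < d ?s"
      then show ?thesis using conj_arrow_index_left[OF wf H D a i] by simp
    next
      assume "i < d ?t" "\<not> j < d ?s"
      then show ?thesis using j by (simp add: conj_corner_def)
    next
      assume "\<not> i < d ?t" "j < d ?s"
      then show ?thesis using conj_arrow_index_left[OF wf H D a i] i by simp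
    next
      assume "\<not> i < d ?t" "\<not> j < d ?s"
      then show ?thesis using i j by (simp add: conj_lower_def)
    qed
    finally show "block_rep Q e d (fst p) (conj_corner Q d e p) (conj_lower Q d e p) a $$ (i,j) = conj_arrow Q d e p a $$ (i,j)" .
  next
    show "dim_row (block_rep Q e d (fst p) (conj_corner Q d e p) (conj_lower Q d e p) a) = dim_row (conj_arrow Q d e p a)"
      using carrier_matD[OF Va] carrier_matD[OF conj_arrow_carrier[of Q d e p a]] carrier_matD[OF conj_lower_carrier[of Q d e p a]]
      by (simp add: block_rep_def)
  next
    show "dim_col (block_rep Q e d (fst p) (conj_corner Q d e p) (conj_lower Q d e p) a) = dim_col (conj_arrow Q d e p a)"
      using carrier_matD[OF Va] carrier_matD[OF conj_arrow_carrier[of Q d e p a]] carrier_matD[OF conj_lower_carrier[of Q d e p a]]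
      by (simp add: block_rep_def)
  qed
qed

lemma ext_of_hom_in_ext_var:
  fixes p :: "'k::field triple"
  assumes adm: "admissible Q I" and wf: "wf_quiver Q"
    and H: "p \<in> hom_var Q I d (\<lambda>x. d x + e x)" and D: "top_dets Q d p \<noteq> 0"
  shows "ext_of_hom Q d e p \<in> ext_var Q I e d"
proof -
  have Vrep: "is_rep Q I d (fst p)" and Wrep: "is_rep Q I (\<lambda>x. d x + e x) (fst (snd p))"
    using H by (auto simp: hom_var_def)
  have Wc: "fst (snd p) a \<in> carrier_mat (d (tgt Q a) + e (tgt Q a)) (d (src Q a) + e (src Q a))" if "a < narrs Q" for a
    using Wrep that by (auto simp: is_rep_def)
  have relB: "satisfies_rels Q I (\<lambda>x. d x + e x)
      (block_rep Q e d (fst p) (conj_corner Q d e p) (conj_lower Q d e p))"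
  proof (rule satisfies_rels_conjugate[OF adm wf _ Wc])
    show "satisfies_rels Q I (\<lambda>x. d x + e x) (fst (snd p))" using Wrep by (simp add: is_rep_def)
  next
    fix y assume "y < nverts Q"
    then have "hom_top_det d p y \<noteq> 0" by (rule top_dets_nonzero[OF D])
    then show "completion_inv d e p y * completion d e p y = 1\<^sub>m (d y + e y)"
      "completion d e p y * completion_inv d e p y = 1\<^sub>m (d y + e y)"
      using completion_inv[of d p y e] by auto
  next
    fix a assume a: "a < narrs Q"
    have "arrow_mat Q d e p a = fst (snd p) a" using Wc[OF a]
      by (intro eq_matI) (auto simp: arrow_mat_def)
    then show "block_rep Q e d (fst p) (conj_corner Q d e p) (conj_lower Q d e p) a
        = completion_inv d e p (tgt Q a) * fst (snd p) a * completion d e p (src Q a)"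
      using block_rep_conj_arrow[OF wf H D a] by (simp add: conj_arrow_def)
  qed auto
  have Vc: "\<And>a. a < narrs Q \<Longrightarrow> fst p a \<in> carrier_mat (d (tgt Q a)) (d (src Q a))"
    using Vrep by (auto simp: is_rep_def)
  have relU: "satisfies_rels Q I e (conj_lower Q d e p)"
    by (rule satisfies_rels_block_rep_lower[OF adm relB Vc]) simp_all
  show ?thesis unfolding ext_var_def ext_of_hom_def using Vrep relU relB by (auto simp: is_rep_def)
qed

definition hom_of_ext :: "quiver \<Rightarrow> (nat \<Rightarrow> nat) \<Rightarrow> (nat \<Rightarrow> nat) \<Rightarrow> 'k::field triple \<Rightarrow> 'k triple" where
  "hom_of_ext Q d e x = (fst (snd x), block_rep Q e d (fst (snd x)) (snd (snd x)) (fst x), incl_mat d e)"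

lemma hom_of_ext_in_hom_var:
  fixes x :: "'k::field triple"
  assumes E: "x \<in> ext_var Q I e d"
  shows "hom_of_ext Q d e x \<in> hom_var Q I d (\<lambda>x. d x + e x)"
proof -
  obtain U V Z where x: "x = (U, V, Z)" by (cases x) auto
  have Urep: "is_rep Q I e U" and Vrep: "is_rep Q I d V"
    and rel: "satisfies_rels Q I (\<lambda>x. d x + e x) (block_rep Q e d V Z U)"
    using E x by (auto simp: ext_var_def)
  have Vc: "V a \<in> carrier_mat (d (tgt Q a)) (d (src Q a))" if "a < narrs Q" for a using Vrep that
    by (auto simp: is_rep_def)
  have Uc: "U a \<in> carrier_mat (e (tgt Q a)) (e (src Q a))" if "a < narrs Q" for a using Urep that
    by (auto simp: is_rep_def)
  have Bc: "block_rep Q e d V Z U a \<in> carrier_mat (d (tgt Q a) + e (tgt Q a)) (d (src Q a) + e (src Q a))"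
    if a: "a < narrs Q" for a
    unfolding block_rep_def by (rule four_block_carrier_mat[OF Vc[OF a] Uc[OF a]])
  have comm: "block_rep Q e d V Z U a * incl_mat d e (src Q a) = incl_mat d e (tgt Q a) * V a" if a: "a < narrs Q" for a
  proof (rule eq_matI)
    fix i j assume "i < dim_row (incl_mat d e (tgt Q a) * V a)" "j < dim_col (incl_mat d e (tgt Q a) * V a)"
    then have i: "i < d (tgt Q a) + e (tgt Q a)" and j: "j < d (src Q a)" using Vc[OF a]
      by (auto simp: incl_mat_def)
    have "(block_rep Q e d V Z U a * incl_mat d e (src Q a)) $$ (i,j) = block_rep Q e d V Z U a $$ (i,j)"
      by (rule mult_incl_mat_index[where d=d and e=e and x="src Q a", OF Bc[OF a] i j])
    also have "\<dots> = (if i < d (tgt Q a) then V a $$ (i,j) else 0)"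
      unfolding block_rep_def using Vc[OF a] Uc[OF a] i j by (subst index_mat_four_block(1)) auto
    also have "\<dots> = (incl_mat d e (tgt Q a) * V a) $$ (i,j)"
      by (rule incl_mat_mult_index[where d=d and e=e and x="tgt Q a", OF Vc[OF a] i j, symmetric])
    finally show "(block_rep Q e d V Z U a * incl_mat d e (src Q a)) $$ (i,j) = (incl_mat d e (tgt Q a) * V a) $$ (i,j)" .
  qed (use Vc[OF a] Bc[OF a] in \<open>auto simp: incl_mat_def\<close>)
  show ?thesis unfolding hom_of_ext_def hom_var_def x
    using Vrep rel Bc comm by (auto simp: is_rep_def)
qed

lemma hom_top_hom_of_ext: "hom_top d (hom_of_ext Q d e x) y = 1\<^sub>m (d y)"
  by (rule eq_matI) (auto simp: hom_top_def hom_of_ext_def incl_mat_def)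

lemma hom_bottom_hom_of_ext: "hom_bottom d e (hom_of_ext Q d e x) y = 0\<^sub>m (e y) (d y)"
  by (rule eq_matI) (auto simp: hom_bottom_def hom_of_ext_def incl_mat_def)

lemma hom_top_det_hom_of_ext: "hom_top_det d (hom_of_ext Q d e x) y = 1"
  by (simp add: hom_top_det_def hom_top_hom_of_ext)

lemma top_dets_hom_of_ext: "top_dets Q d (hom_of_ext Q d e x) = 1"
  by (simp add: top_dets_def hom_top_det_hom_of_ext)

lemma completion_hom_of_ext: "completion d e (hom_of_ext Q d e x) y = 1\<^sub>m (d y + e y)"
  by (simp add: completion_def hom_top_hom_of_ext hom_bottom_hom_of_ext)

lemma completion_inv_hom_of_ext: "completion_inv d e (hom_of_ext Q d e x) y = 1\<^sub>m (d y + e y)"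
proof -
  have "completion_inv d e (hom_of_ext Q d e x) y * completion d e (hom_of_ext Q d e x) y = 1\<^sub>m (d y + e y)"
    by (rule completion_inv(1)) (simp add: hom_top_det_hom_of_ext)
  then show ?thesis unfolding completion_hom_of_ext
    using right_mult_one_mat[OF completion_inv_carrier[of d e "hom_of_ext Q d e x" y]] by simp
qed

lemma conj_arrow_hom_of_ext:
  assumes E: "x \<in> ext_var Q I e d" and a: "a < narrs Q"
  shows "conj_arrow Q d e (hom_of_ext Q d e x) a = block_rep Q e d (fst (snd x)) (snd (snd x)) (fst x) a"
proof -
  have H: "hom_of_ext Q d e x \<in> hom_var Q I d (\<lambda>x. d x + e x)"
    by (rule hom_of_ext_in_hom_var[OF E])
  have Bc: "fst (snd (hom_of_ext Q d e x)) a \<in> carrier_mat (d (tgt Q a) + e (tgt Q a)) (d (src Q a) + e (src Q a))"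
    using H a by (auto simp: hom_var_def is_rep_def)
  have Wt: "arrow_mat Q d e (hom_of_ext Q d e x) a = fst (snd (hom_of_ext Q d e x)) a" using Bc
    by (intro eq_matI) (auto simp: arrow_mat_def)
  show ?thesis unfolding conj_arrow_def completion_inv_hom_of_ext completion_hom_of_ext Wt using Bc
    by (simp add: hom_of_ext_def)
qed

lemma ext_of_hom_of_ext_coord:
  assumes E: "x \<in> ext_var Q I e d" and c: "c \<in> ext_coords Q e d"
  shows "c (ext_of_hom Q d e (hom_of_ext Q d e x)) = c x"
proof -
  obtain U V Z where x: "x = (U, V, Z)" by (cases x) auto
  have Urep: "is_rep Q I e U" and Vrep: "is_rep Q I d V"
    using E x by (auto simp: ext_var_def)
  have Vc: "V a \<in> carrier_mat (d (tgt Q a)) (d (src Q a))" if "a < narrs Q" for a using Vrep that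
    by (auto simp: is_rep_def)
  have Uc: "U a \<in> carrier_mat (e (tgt Q a)) (e (src Q a))" if "a < narrs Q" for a using Urep that
    by (auto simp: is_rep_def)
  from c consider
    (U) a i j where "c = (\<lambda>P. fst P a $$ (i,j))" "a < narrs Q" "i < e (tgt Q a)" "j < e (src Q a)"
  | (V) a i j where "c = (\<lambda>P. (fst \<circ> snd) P a $$ (i,j))" "a < narrs Q" "i < d (tgt Q a)" "j < d (src Q a)"
  | (Z) a i j where "c = (\<lambda>P. (snd \<circ> snd) P a $$ (i,j))" "a < narrs Q" "i < d (tgt Q a)" "j < e (src Q a)"
    unfolding ext_coords_def arrow_coords_def by blast
  then show ?thesis
  proof cases
    case U
    have "conj_lower Q d e (hom_of_ext Q d e x) a $$ (i,j) = conj_arrow Q d e (hom_of_ext Q d e x) a $$ (d (tgt Q a) + i, d (src Q a) + j)"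
      using U by (simp add: conj_lower_def)
    also have "\<dots> = block_rep Q e d V Z U a $$ (d (tgt Q a) + i, d (src Q a) + j)"
      using conj_arrow_hom_of_ext[OF E U(2)] x by simp
    also have "\<dots> = U a $$ (i,j)"
      unfolding block_rep_def using U Vc[OF U(2)] Uc[OF U(2)]
      by (subst index_mat_four_block(1)) auto
    finally show ?thesis using U x by (simp add: ext_of_hom_def)
  next
    case V
    then show ?thesis using x by (simp add: ext_of_hom_def hom_of_ext_def)
  next
    case Z
    have "conj_corner Q d e (hom_of_ext Q d e x) a $$ (i,j) = conj_arrow Q d e (hom_of_ext Q d e x) a $$ (i, d (src Q a) + j)"
      using Z by (simp add: conj_corner_def)
    also have "\<dots> = block_rep Q e d V Z U a $$ (i, d (src Q a) + j)"
      using conj_arrow_hom_of_ext[OF E Z(2)] x by simp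
    also have "\<dots> = Z a $$ (i,j)"
      unfolding block_rep_def using Z Vc[OF Z(2)] Uc[OF Z(2)]
      by (subst index_mat_four_block(1)) auto
    finally show ?thesis using Z x by (simp add: ext_of_hom_def)
  qed
qed

lemma hom_coord_source:
  assumes "a < narrs Q" "i < d (tgt Q a)" "j < d (src Q a)"
  shows "(\<lambda>p::'k::field triple. fst p a $$ (i,j)) \<in> poly_funs (hom_coords Q d (\<lambda>x. d x + e x))"
proof (rule poly_funs.coord)
  show "(\<lambda>p::'k::field triple. fst p a $$ (i,j)) \<in> hom_coords Q d (\<lambda>x. d x + e x)"
    unfolding hom_coords_def arrow_coords_def using assms by blast
qed

lemma hom_coord_target:
  assumes "a < narrs Q" "i < d (tgt Q a) + e (tgt Q a)" "j < d (src Q a) + e (src Q a)"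
  shows "(\<lambda>p::'k::field triple. fst (snd p) a $$ (i,j)) \<in> poly_funs (hom_coords Q d (\<lambda>x. d x + e x))"
proof (rule poly_funs.coord)
  have "(\<lambda>p::'k::field triple. (fst \<circ> snd) p a $$ (i,j)) \<in> arrow_coords Q (\<lambda>x. d x + e x) (\<lambda>x. d x + e x) (fst \<circ> snd)"
    unfolding arrow_coords_def using assms by blast
  then show "(\<lambda>p::'k::field triple. fst (snd p) a $$ (i,j)) \<in> hom_coords Q d (\<lambda>x. d x + e x)"
    unfolding hom_coords_def by simp
qed

lemma hom_coord_map:
  assumes "x < nverts Q" "i < d x + e x" "j < d x"
  shows "(\<lambda>p::'k::field triple. snd (snd p) x $$ (i,j)) \<in> poly_funs (hom_coords Q d (\<lambda>x. d x + e x))"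
proof (rule poly_funs.coord)
  have "(\<lambda>p::'k::field triple. (snd \<circ> snd) p x $$ (i,j)) \<in> vertex_coords Q (\<lambda>x. d x + e x) d (snd \<circ> snd)"
    unfolding vertex_coords_def using assms by blast
  then show "(\<lambda>p::'k::field triple. snd (snd p) x $$ (i,j)) \<in> hom_coords Q d (\<lambda>x. d x + e x)"
    unfolding hom_coords_def by simp
qed

lemma poly_mat_hom_top:
  assumes "x < nverts Q"
  shows "poly_mat (hom_coords Q d (\<lambda>x. d x + e x)) (d x) (d x) (\<lambda>p::'k::field triple. hom_top d p x)"
  unfolding hom_top_def by (rule poly_mat_mat) (rule hom_coord_map[OF assms], auto)

lemma poly_mat_hom_bottom:
  assumes "x < nverts Q"
  shows "poly_mat (hom_coords Q d (\<lambda>x. d x + e x)) (e x) (d x) (\<lambda>p::'k::field triple. hom_bottom d e p x)"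
  unfolding hom_bottom_def by (rule poly_mat_mat) (rule hom_coord_map[OF assms], auto)

lemma poly_funs_hom_top_det:
  assumes "x < nverts Q"
  shows "(\<lambda>p::'k::field triple. hom_top_det d p x) \<in> poly_funs (hom_coords Q d (\<lambda>x. d x + e x))"
  unfolding hom_top_det_def by (rule poly_mat_det[OF poly_mat_hom_top[OF assms]])

lemma poly_mat_completion:
  assumes "x < nverts Q"
  shows "poly_mat (hom_coords Q d (\<lambda>x. d x + e x)) (d x + e x) (d x + e x) (\<lambda>p::'k::field triple. completion d e p x)"
  unfolding completion_def
    by (rule poly_mat_four_block[OF poly_mat_hom_top[OF assms] poly_mat_zero poly_mat_hom_bottom[OF assms] poly_mat_one])

lemma poly_mat_completion_adj:
  assumes "x < nverts Q"
  shows "poly_mat (hom_coords Q d (\<lambda>x. d x + e x)) (d x + e x) (d x + e x) (\<lambda>p::'k::field triple. completion_adj d e p x)"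
  unfolding completion_adj_def
  by (rule poly_mat_four_block[OF poly_mat_adj[OF poly_mat_hom_top[OF assms]] poly_mat_zero
        poly_mat_uminus[OF poly_mat_mult[OF poly_mat_hom_bottom[OF assms] poly_mat_adj[OF poly_mat_hom_top[OF assms]]]]
        poly_mat_smult[OF poly_mat_one poly_funs_hom_top_det[OF assms]]])

lemma poly_mat_arrow_mat:
  assumes "a < narrs Q"
  shows "poly_mat (hom_coords Q d (\<lambda>x. d x + e x)) (d (tgt Q a) + e (tgt Q a)) (d (src Q a) + e (src Q a)) (\<lambda>p::'k::field triple. arrow_mat Q d e p a)"
  unfolding arrow_mat_def by (rule poly_mat_mat) (rule hom_coord_target[OF assms], auto)

lemma poly_funs_top_dets:
  "(\<lambda>p::'k::field triple. top_dets Q d p) \<in> poly_funs (hom_coords Q d (\<lambda>x. d x + e x))"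
  unfolding top_dets_def by (rule poly_funs_prod) (auto intro: poly_funs_hom_top_det)

lemma index_conj_arrow:
  assumes i: "i < d (tgt Q a) + e (tgt Q a)" and j: "j < d (src Q a) + e (src Q a)"
  shows "conj_arrow Q d e p a $$ (i,j) = 1 / hom_top_det d p (tgt Q a)
    * (completion_adj d e p (tgt Q a) * arrow_mat Q d e p a * completion d e p (src Q a)) $$ (i,j)"
proof -
  let ?c = "1 / hom_top_det d p (tgt Q a)"
  have "conj_arrow Q d e p a
      = ?c \<cdot>\<^sub>m (completion_adj d e p (tgt Q a) * arrow_mat Q d e p a * completion d e p (src Q a))"
    unfolding conj_arrow_def completion_inv_def
    by (simp add: mult_smult_assoc_mat[OF completion_adj_carrier arrow_mat_carrier]
        mult_smult_assoc_mat[OF mult_carrier_mat[OF completion_adj_carrier arrow_mat_carrier] completion_carrier]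
        del: assoc_mult_mat)
  then show ?thesis
    using i j carrier_matD[OF completion_adj_carrier[of d e p "tgt Q a"]]
      carrier_matD[OF completion_carrier[of d e p "src Q a"]]
    by (simp del: assoc_mult_mat)
qed

lemma conj_arrow_rational:
  assumes wf: "wf_quiver Q" and a: "a < narrs Q"
    and i: "i < d (tgt Q a) + e (tgt Q a)" and j: "j < d (src Q a) + e (src Q a)"
  shows "\<exists>P\<in>poly_funs (hom_coords Q d (\<lambda>x. d x + e x)). \<forall>p::'k::field triple.
    top_dets Q d p \<noteq> 0 \<longrightarrow> P p = top_dets Q d p * conj_arrow Q d e p a $$ (i,j)"
proof
  let ?s = "src Q a" and ?t = "tgt Q a"
  have st: "?s < nverts Q" "?t < nverts Q" using wf a by (auto simp: wf_quiver_def)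
  let ?R = "\<lambda>p::'k triple. \<Prod>x\<in>{..<nverts Q} - {?t}. hom_top_det d p x"
  let ?M = "\<lambda>p::'k triple. completion_adj d e p ?t * arrow_mat Q d e p a * completion d e p ?s"
  \<comment> \<open>The denominator of conj_arrow at ?t cancels against the factor ?t of top_dets.\<close>
  show "(\<lambda>p. ?R p * ?M p $$ (i,j)) \<in> poly_funs (hom_coords Q d (\<lambda>x. d x + e x))"
  proof (rule poly_funs.mult)
    show "?R \<in> poly_funs (hom_coords Q d (\<lambda>x. d x + e x))"
      by (rule poly_funs_prod) (auto intro: poly_funs_hom_top_det)
    show "(\<lambda>p. ?M p $$ (i,j)) \<in> poly_funs (hom_coords Q d (\<lambda>x. d x + e x))"
      by (rule poly_matD(1)[OF poly_mat_mult[OF poly_mat_mult[OF poly_mat_completion_adj[OF st(2)]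
            poly_mat_arrow_mat[OF a]] poly_mat_completion[OF st(1)]] i j])
  qed
  show "\<forall>p. top_dets Q d p \<noteq> 0 \<longrightarrow> ?R p * ?M p $$ (i,j) = top_dets Q d p * conj_arrow Q d e p a $$ (i,j)"
  proof (intro allI impI)
    fix p :: "'k triple" assume D: "top_dets Q d p \<noteq> 0"
    have "top_dets Q d p = hom_top_det d p ?t * ?R p"
      unfolding top_dets_def by (rule prod.remove) (use st in auto)
    then show "?R p * ?M p $$ (i,j) = top_dets Q d p * conj_arrow Q d e p a $$ (i,j)"
      unfolding index_conj_arrow[OF i j] using top_dets_nonzero[OF D st(2)] by simp
  qed
qed

lemma ext_of_hom_rational:
  assumes wf: "wf_quiver Q"
  shows "rational_map (hom_coords Q d (\<lambda>x. d x + e x)) (top_dets Q d) (ext_coords Q e d)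
    (ext_of_hom Q d e :: 'k::field triple \<Rightarrow> 'k triple)"
  unfolding rational_map_def
proof
  fix c :: "'k triple \<Rightarrow> 'k" assume c: "c \<in> ext_coords Q e d"
  from c consider
    (U) a i j where "c = (\<lambda>P. fst P a $$ (i,j))" "a < narrs Q" "i < e (tgt Q a)" "j < e (src Q a)"
  | (V) a i j where "c = (\<lambda>P. (fst \<circ> snd) P a $$ (i,j))" "a < narrs Q" "i < d (tgt Q a)" "j < d (src Q a)"
  | (Z) a i j where "c = (\<lambda>P. (snd \<circ> snd) P a $$ (i,j))" "a < narrs Q" "i < d (tgt Q a)" "j < e (src Q a)"
    unfolding ext_coords_def arrow_coords_def by blast
  then show "\<exists>P\<in>poly_funs (hom_coords Q d (\<lambda>x. d x + e x)).
      \<forall>p. top_dets Q d p \<noteq> 0 \<longrightarrow> P p = top_dets Q d p * c (ext_of_hom Q d e p)"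
  proof cases
    case U
    obtain P where P: "P \<in> poly_funs (hom_coords Q d (\<lambda>x. d x + e x))"
      "\<forall>p::'k triple. top_dets Q d p \<noteq> 0 \<longrightarrow> P p = top_dets Q d p * conj_arrow Q d e p a $$ (d (tgt Q a) + i, d (src Q a) + j)"
      using conj_arrow_rational[OF wf U(2), where d=d and e=e and i="d (tgt Q a) + i"
        and j="d (src Q a) + j"] U by auto
    have "\<forall>p::'k triple. top_dets Q d p \<noteq> 0 \<longrightarrow> P p = top_dets Q d p * c (ext_of_hom Q d e p)"
      using P(2) U by (simp add: ext_of_hom_def conj_lower_def)
    then show ?thesis using P(1) by blast
  next
    case V
    show ?thesis
    proof (rule bexI[of _ "\<lambda>p. top_dets Q d p * fst p a $$ (i,j)"])
      show "(\<lambda>p. top_dets Q d p * fst p a $$ (i,j)) \<in> poly_funs (hom_coords Q d (\<lambda>x. d x + e x))"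
        by (rule poly_funs.mult[OF poly_funs_top_dets hom_coord_source[OF V(2-4)]])
    qed (use V in \<open>simp add: ext_of_hom_def\<close>)
  next
    case Z
    obtain P where P: "P \<in> poly_funs (hom_coords Q d (\<lambda>x. d x + e x))"
      "\<forall>p::'k triple. top_dets Q d p \<noteq> 0 \<longrightarrow> P p = top_dets Q d p * conj_arrow Q d e p a $$ (i, d (src Q a) + j)"
      using conj_arrow_rational[OF wf Z(2), where d=d and e=e and i=i and j="d (src Q a) + j"] Z by auto
    have "\<forall>p::'k triple. top_dets Q d p \<noteq> 0 \<longrightarrow> P p = top_dets Q d p * c (ext_of_hom Q d e p)"
      using P(2) Z by (simp add: ext_of_hom_def conj_corner_def)
    then show ?thesis using P(1) by blast
  qed
qed

theorem corollary3p3: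
  fixes Q :: quiver and I :: "(path \<Rightarrow> 'k::field) set"
  assumes "alg_closed TYPE('k)"
    and "wf_quiver Q"
    and "admissible Q I"
    and "hom_irreducible Q I"
  shows "ext_irreducible Q I"
  unfolding ext_irreducible_def
proof (intro allI)
  fix e d :: "nat \<Rightarrow> nat"
  show "irreducible_var (ext_coords Q e d) (ext_var Q I e d)"
  proof (rule irreducible_var_rational_retract[where D = "top_dets Q d"
        and \<psi> = "ext_of_hom Q d e" and \<sigma> = "hom_of_ext Q d e"])
    show "irreducible_var (hom_coords Q d (\<lambda>x. d x + e x)) (hom_var Q I d (\<lambda>x. d x + e x))"
      using assms(4) unfolding hom_irreducible_def by blast
    show "top_dets Q d \<in> poly_funs (hom_coords Q d (\<lambda>x. d x + e x))"
      by (rule poly_funs_top_dets)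
    show "rational_map (hom_coords Q d (\<lambda>x. d x + e x)) (top_dets Q d) (ext_coords Q e d) (ext_of_hom Q d e)"
      by (rule ext_of_hom_rational[OF assms(2)])
    show "ext_of_hom Q d e p \<in> ext_var Q I e d"
      if "p \<in> hom_var Q I d (\<lambda>x. d x + e x)" "top_dets Q d p \<noteq> 0" for p
      using ext_of_hom_in_ext_var[OF assms(3,2) that] .
    show "hom_of_ext Q d e y \<in> hom_var Q I d (\<lambda>x. d x + e x) \<and> top_dets Q d (hom_of_ext Q d e y) \<noteq> 0"
      if "y \<in> ext_var Q I e d" for y
      by (simp add: hom_of_ext_in_hom_var[OF that] top_dets_hom_of_ext)
    show "c (ext_of_hom Q d e (hom_of_ext Q d e y)) = c y"
      if "y \<in> ext_var Q I e d" "c \<in> ext_coords Q e d" for y c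
      using ext_of_hom_of_ext_coord[OF that] .
    show "ext_var Q I e d \<noteq> {}"
      by (rule ext_var_nonempty[OF assms(3)])
  qed
qed

end
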